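(* The functor $\mathrm{Skew}$ from curved associative algebras to curved Lie algebras, sending $(A,\mu_A,d_A,\vartheta)$ to $(A,[x,y]=\mu_A(x,y)-(-1)^{|x||y|}\mu_A(y,x),d_A,\vartheta)$, has a left adjoint $\mathfrak{U}$ (the curved universal enveloping algebra).
   Context: Ground field $\mathbb{K}$ of characteristic $0$, graded modules with Koszul signs, homological grading. A curved Lie algebra $(\mathfrak{g},[-,-],d_\mathfrak{g},\vartheta)$ is a graded Lie algebra with a degree $-1$ derivation $d_\mathfrak{g}$ of the bracket and an element $\vartheta\in\mathfrak{g}_{-2}$ with $d_\mathfrak{g}^2=[\vartheta,-]$ and $d_\mathfrak{g}(\vartheta)=0$; morphisms are graded Lie algebra maps commuting with pre-differentials and preserving curvatures. A curved associative algebra $(A,\mu_A,d_A,\vartheta)$ is a non-unital graded associative algebra with a degree $-1$ derivation $d_A$ and $\vartheta\in A_{-2}$ with $d_A^2=\mu_A(\vartheta,-)-\mu_A(-,\vartheta)$ and $d_A(\vartheta)=0$; morphisms are algebra maps commuting with pre-differentials and preserving curvatures. *)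

theory Defs
  imports "HOL-Algebra.Module"
begin

definition Kring :: "('k::field_char_0) ring" where
  "Kring = \<lparr>carrier = UNIV, mult = (*), one = 1, zero = 0, add = (+)\<rparr>"

text \<open>A (pre-)structure: a K-module (carrier set, addition, scalar multiplication),
  a binary product (the field mult: the associative product, resp. the Lie bracket),
  homogeneous components hom n (homological Z-grading), a pre-differential pd
  and a curvature curv. The fields one of the ring record is unused.\<close>

record ('k, 'a) cstruct = "('k, 'a) module" +
  hom :: "int \<Rightarrow> 'a set"
  pd :: "'a \<Rightarrow> 'a"
  curv :: "'a"

definition ksign :: "int \<Rightarrow> 'k::field_char_0" where
  "ksign n = (if even n then 1 else - 1)"

definition graded_module :: "('k::field_char_0, 'a) cstruct \<Rightarrow> bool" where
  "graded_module M \<longleftrightarrow>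
     module Kring M \<and>
     (\<forall>n. hom M n \<subseteq> carrier M \<and> \<zero>\<^bsub>M\<^esub> \<in> hom M n \<and>
          (\<forall>x\<in>hom M n. \<forall>y\<in>hom M n. x \<oplus>\<^bsub>M\<^esub> y \<in> hom M n) \<and>
          (\<forall>c. \<forall>x\<in>hom M n. smult M c x \<in> hom M n)) \<and>
     (\<forall>x\<in>carrier M. \<exists>!c. finite {n. c n \<noteq> \<zero>\<^bsub>M\<^esub>} \<and> (\<forall>n. c n \<in> hom M n) \<and>
          x = finsum M c {n. c n \<noteq> \<zero>\<^bsub>M\<^esub>})"

definition bilinear_product :: "('k::field_char_0, 'a) cstruct \<Rightarrow> bool" where
  "bilinear_product M \<longleftrightarrow>
     (\<forall>x\<in>carrier M. \<forall>y\<in>carrier M. x \<otimes>\<^bsub>M\<^esub> y \<in> carrier M) \<and>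
     (\<forall>x\<in>carrier M. \<forall>y\<in>carrier M. \<forall>z\<in>carrier M.
        (x \<oplus>\<^bsub>M\<^esub> y) \<otimes>\<^bsub>M\<^esub> z = (x \<otimes>\<^bsub>M\<^esub> z) \<oplus>\<^bsub>M\<^esub> (y \<otimes>\<^bsub>M\<^esub> z) \<and>
        z \<otimes>\<^bsub>M\<^esub> (x \<oplus>\<^bsub>M\<^esub> y) = (z \<otimes>\<^bsub>M\<^esub> x) \<oplus>\<^bsub>M\<^esub> (z \<otimes>\<^bsub>M\<^esub> y)) \<and>
     (\<forall>c. \<forall>x\<in>carrier M. \<forall>y\<in>carrier M.
        smult M c x \<otimes>\<^bsub>M\<^esub> y = smult M c (x \<otimes>\<^bsub>M\<^esub> y) \<and>
        x \<otimes>\<^bsub>M\<^esub> smult M c y = smult M c (x \<otimes>\<^bsub>M\<^esub> y)) \<and>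
     (\<forall>p q. \<forall>x\<in>hom M p. \<forall>y\<in>hom M q. x \<otimes>\<^bsub>M\<^esub> y \<in> hom M (p + q))"

definition predifferential :: "('k::field_char_0, 'a) cstruct \<Rightarrow> bool" where
  "predifferential M \<longleftrightarrow>
     (\<forall>x\<in>carrier M. pd M x \<in> carrier M) \<and>
     (\<forall>x\<in>carrier M. \<forall>y\<in>carrier M. pd M (x \<oplus>\<^bsub>M\<^esub> y) = pd M x \<oplus>\<^bsub>M\<^esub> pd M y) \<and>
     (\<forall>c. \<forall>x\<in>carrier M. pd M (smult M c x) = smult M c (pd M x)) \<and>
     (\<forall>n. \<forall>x\<in>hom M n. pd M x \<in> hom M (n - 1))"

definition curved_lie :: "('k::field_char_0, 'a) cstruct \<Rightarrow> bool" where
  "curved_lie L \<longleftrightarrow>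
     graded_module L \<and> bilinear_product L \<and> predifferential L \<and>
     \<comment> \<open>graded antisymmetry\<close>
     (\<forall>p q. \<forall>x\<in>hom L p. \<forall>y\<in>hom L q.
        x \<otimes>\<^bsub>L\<^esub> y = \<ominus>\<^bsub>L\<^esub> smult L (ksign (p * q)) (y \<otimes>\<^bsub>L\<^esub> x)) \<and>
     \<comment> \<open>graded Jacobi identity (Leibniz form)\<close>
     (\<forall>p q. \<forall>x\<in>hom L p. \<forall>y\<in>hom L q. \<forall>z\<in>carrier L.
        x \<otimes>\<^bsub>L\<^esub> (y \<otimes>\<^bsub>L\<^esub> z) =
          ((x \<otimes>\<^bsub>L\<^esub> y) \<otimes>\<^bsub>L\<^esub> z) \<oplus>\<^bsub>L\<^esub> smult L (ksign (p * q)) (y \<otimes>\<^bsub>L\<^esub> (x \<otimes>\<^bsub>L\<^esub> z))) \<and>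
     \<comment> \<open>pd is a derivation of the bracket\<close>
     (\<forall>p. \<forall>x\<in>hom L p. \<forall>y\<in>carrier L.
        pd L (x \<otimes>\<^bsub>L\<^esub> y) = (pd L x \<otimes>\<^bsub>L\<^esub> y) \<oplus>\<^bsub>L\<^esub> smult L (ksign p) (x \<otimes>\<^bsub>L\<^esub> pd L y)) \<and>
     curv L \<in> hom L (-2) \<and>
     (\<forall>x\<in>carrier L. pd L (pd L x) = curv L \<otimes>\<^bsub>L\<^esub> x) \<and>
     pd L (curv L) = \<zero>\<^bsub>L\<^esub>"

definition curved_assoc :: "('k::field_char_0, 'a) cstruct \<Rightarrow> bool" where
  "curved_assoc A \<longleftrightarrow>
     graded_module A \<and> bilinear_product A \<and> predifferential A \<and>
     (\<forall>x\<in>carrier A. \<forall>y\<in>carrier A. \<forall>z\<in>carrier A.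
        (x \<otimes>\<^bsub>A\<^esub> y) \<otimes>\<^bsub>A\<^esub> z = x \<otimes>\<^bsub>A\<^esub> (y \<otimes>\<^bsub>A\<^esub> z)) \<and>
     (\<forall>p. \<forall>x\<in>hom A p. \<forall>y\<in>carrier A.
        pd A (x \<otimes>\<^bsub>A\<^esub> y) = (pd A x \<otimes>\<^bsub>A\<^esub> y) \<oplus>\<^bsub>A\<^esub> smult A (ksign p) (x \<otimes>\<^bsub>A\<^esub> pd A y)) \<and>
     curv A \<in> hom A (-2) \<and>
     (\<forall>x\<in>carrier A. pd A (pd A x) = (curv A \<otimes>\<^bsub>A\<^esub> x) \<ominus>\<^bsub>A\<^esub> (x \<otimes>\<^bsub>A\<^esub> curv A)) \<and>
     pd A (curv A) = \<zero>\<^bsub>A\<^esub>"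

definition cmor :: "('k::field_char_0, 'a) cstruct \<Rightarrow> ('k, 'b) cstruct \<Rightarrow> ('a \<Rightarrow> 'b) \<Rightarrow> bool" where
  "cmor M N f \<longleftrightarrow>
     (\<forall>x\<in>carrier M. f x \<in> carrier N) \<and>
     (\<forall>x\<in>carrier M. \<forall>y\<in>carrier M. f (x \<oplus>\<^bsub>M\<^esub> y) = f x \<oplus>\<^bsub>N\<^esub> f y) \<and>
     (\<forall>c. \<forall>x\<in>carrier M. f (smult M c x) = smult N c (f x)) \<and>
     (\<forall>n. \<forall>x\<in>hom M n. f x \<in> hom N n) \<and>
     (\<forall>x\<in>carrier M. \<forall>y\<in>carrier M. f (x \<otimes>\<^bsub>M\<^esub> y) = f x \<otimes>\<^bsub>N\<^esub> f y) \<and>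
     (\<forall>x\<in>carrier M. f (pd M x) = pd N (f x)) \<and>
     f (curv M) = curv N"

definition comps :: "('k::field_char_0, 'a) cstruct \<Rightarrow> 'a \<Rightarrow> int \<Rightarrow> 'a" where
  "comps M x = (THE c. finite {n. c n \<noteq> \<zero>\<^bsub>M\<^esub>} \<and> (\<forall>n. c n \<in> hom M n) \<and>
                        x = finsum M c {n. c n \<noteq> \<zero>\<^bsub>M\<^esub>})"

definition degs :: "('k::field_char_0, 'a) cstruct \<Rightarrow> 'a \<Rightarrow> int set" where
  "degs M x = {n. comps M x n \<noteq> \<zero>\<^bsub>M\<^esub>}"

text \<open>[x,y] = x y - (-1)^(|x||y|) y x on homogeneous elements, extended bilinearly.\<close>
definition skew_bracket :: "('k::field_char_0, 'a) cstruct \<Rightarrow> 'a \<Rightarrow> 'a \<Rightarrow> 'a" where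
  "skew_bracket A x y =
     (x \<otimes>\<^bsub>A\<^esub> y) \<ominus>\<^bsub>A\<^esub>
       finsum A (\<lambda>p. finsum A (\<lambda>q. smult A (ksign (p * q)) (comps A y q \<otimes>\<^bsub>A\<^esub> comps A x p))
                             (degs A y)) (degs A x)"

definition Skew :: "('k::field_char_0, 'a) cstruct \<Rightarrow> ('k, 'a) cstruct" where
  "Skew A = A\<lparr>mult := skew_bracket A\<rparr>"

text \<open>(U, eta) is a universal arrow from the curved Lie algebra g to the functor Skew,
  tested against all curved associative algebras whose carrier lives in type 'b.\<close>
definition universal_arrow ::
  "('k::field_char_0, 'a) cstruct \<Rightarrow> ('k, 'u) cstruct \<Rightarrow> ('a \<Rightarrow> 'u) \<Rightarrow> 'b itself \<Rightarrow> bool" where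
  "universal_arrow g U eta (_ :: 'b itself) \<longleftrightarrow>
     curved_assoc U \<and> cmor g (Skew U) eta \<and>
     (\<forall>(A :: ('k, 'b) cstruct) f. curved_assoc A \<and> cmor g (Skew A) f \<longrightarrow>
        (\<exists>h. cmor U A h \<and> (\<forall>x\<in>carrier g. h (eta x) = f x) \<and>
             (\<forall>h'. cmor U A h' \<and> (\<forall>x\<in>carrier g. h' (eta x) = f x) \<longrightarrow>
                   (\<forall>y\<in>carrier U. h' y = h y))))"

text \<open>The curved universal enveloping algebra: a universal arrow chosen with carrier in the
  fixed type ('k * 'a list) list (large enough to hold a copy of it).\<close>
type_synonym ('k, 'a) uea_carrier = "('k \<times> 'a list) list"

definition cUEA ::
  "('k::field_char_0, 'a) cstruct \<Rightarrow> ('k, ('k, 'a) uea_carrier) cstruct \<times> ('a \<Rightarrow> ('k, 'a) uea_carrier)" where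
  "cUEA g = (SOME (U, eta). universal_arrow g U eta TYPE(('k, 'a) uea_carrier))"

end

(* The enveloping algebra is a term model. Terms are formal linear combinations of nonempty
   words in homogeneous elements of g, with the evident product, scalar multiplication and
   pre-differential (the Leibniz rule with Koszul signs). Two terms are identified when they
   have the same value under every morphism g -> Skew B into a curved algebra B whose carrier
   is the term type itself. The classes form a curved algebra because they embed jointly into
   all these B, evaluation gives the factorisation through it, and the factorisation is unique
   because every class is built from images of g.
   Universality against algebras A of arbitrary type needs one more idea: the subalgebra of A
   generated by the image of g is a quotient of the term algebra, so it has a copy inside the
   term type which is one of the B; hence identified terms also agree in A. Finally, any two
   universal arrows with carriers in one type are isomorphic, which makes the arrow chosen by
   cUEA universal as well. *)

theory Submission
  imports Defs
begin

lemma Kring_simps [simp]: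
  "carrier Kring = UNIV" "add Kring a b = a + b" "mult Kring a b = a * b"
  "zero Kring = 0" "one Kring = 1"
  by (simp_all add: Kring_def)

lemma cring_Kring: "cring (Kring :: 'k::field_char_0 ring)"
proof (rule cringI)
  show "abelian_group (Kring :: 'k ring)"
  proof (rule abelian_groupI)
    fix x :: 'k
    show "\<exists>y\<in>carrier Kring. y \<oplus>\<^bsub>Kring\<^esub> x = \<zero>\<^bsub>Kring\<^esub>"
      by (rule bexI[of _ "- x"]) simp_all
  qed (simp_all add: algebra_simps)
  show "comm_monoid (Kring :: 'k ring)"
    by (rule comm_monoidI) (auto simp: algebra_simps)
qed (simp add: algebra_simps)

lemma additive_finsum:
  assumes "abelian_monoid M" "abelian_monoid N"
    and closed: "\<And>x. x \<in> carrier M \<Longrightarrow> \<phi> x \<in> carrier N"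
    and add: "\<And>x y. x \<in> carrier M \<Longrightarrow> y \<in> carrier M \<Longrightarrow> \<phi> (x \<oplus>\<^bsub>M\<^esub> y) = \<phi> x \<oplus>\<^bsub>N\<^esub> \<phi> y"
    and zero: "\<phi> \<zero>\<^bsub>M\<^esub> = \<zero>\<^bsub>N\<^esub>"
    and "finite F" "c \<in> F \<rightarrow> carrier M"
  shows "\<phi> (finsum M c F) = finsum N (\<lambda>n. \<phi> (c n)) F"
  using \<open>finite F\<close> \<open>c \<in> F \<rightarrow> carrier M\<close>
proof (induction F rule: finite_induct)
  case empty
  interpret M: abelian_monoid M by fact
  interpret N: abelian_monoid N by fact
  show ?case using zero by simp
next
  case (insert a F)
  interpret M: abelian_monoid M by fact
  interpret N: abelian_monoid N by fact
  have "c \<in> F \<rightarrow> carrier M" "c a \<in> carrier M" using insert.prems by auto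
  then show ?case
    using insert closed by (simp add: add M.finsum_insert N.finsum_insert Pi_iff)
qed

lemma (in abelian_monoid) finsum_zero_extend:
  assumes "finite B" "A \<subseteq> B" "\<And>i. i \<in> B - A \<Longrightarrow> h i = \<zero>" "h \<in> B \<rightarrow> carrier G"
  shows "finsum G h A = finsum G h B"
  using add.finprod_mono_neutral_cong_left[of B A h h] assms by simp

lemma comps_graded_module:
  assumes "graded_module M" "x \<in> carrier M"
  shows "finite (degs M x)" "comps M x n \<in> hom M n" "x = finsum M (comps M x) (degs M x)"
proof -
  from assms have "\<exists>!c. finite {n. c n \<noteq> \<zero>\<^bsub>M\<^esub>} \<and> (\<forall>n. c n \<in> hom M n) \<and>
      x = finsum M c {n. c n \<noteq> \<zero>\<^bsub>M\<^esub>}"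
    by (simp add: graded_module_def)
  from theI'[OF this] show "finite (degs M x)" "comps M x n \<in> hom M n"
    "x = finsum M (comps M x) (degs M x)"
    unfolding comps_def[symmetric] degs_def by auto
qed

lemma comps_eqI:
  assumes M: "graded_module M" and "finite D" "\<And>n. n \<notin> D \<Longrightarrow> c n = \<zero>\<^bsub>M\<^esub>"
    and hom: "\<And>n. c n \<in> hom M n" and x: "x = finsum M c D"
  shows "comps M x = c"
proof -
  interpret abelian_group M
    using M module.axioms(2) by (auto simp: graded_module_def)
  have hom_closed: "\<And>n. hom M n \<subseteq> carrier M"
    using M by (simp add: graded_module_def)
  have supp: "{n. c n \<noteq> \<zero>\<^bsub>M\<^esub>} \<subseteq> D" using assms(3) by blast
  have "x = finsum M c {n. c n \<noteq> \<zero>\<^bsub>M\<^esub>}"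
    unfolding x using hom hom_closed
    by (intro finsum_zero_extend[symmetric, OF \<open>finite D\<close> supp]) auto
  moreover have "x \<in> carrier M"
    unfolding x using hom hom_closed by (intro finsum_closed) auto
  moreover have "finite {n. c n \<noteq> \<zero>\<^bsub>M\<^esub>}"
    using supp \<open>finite D\<close> by (rule finite_subset)
  ultimately show ?thesis
    using M hom unfolding comps_def graded_module_def by (intro the1_equality) auto
qed

lemma finsum_comps_superset:
  assumes "graded_module M" "x \<in> carrier M" "finite D" "degs M x \<subseteq> D"
  shows "finsum M (comps M x) D = x"
proof -
  interpret abelian_group M
    using assms(1) module.axioms(2) by (auto simp: graded_module_def)
  have "\<And>n. hom M n \<subseteq> carrier M"
    using assms(1) by (simp add: graded_module_def)
  then have "comps M x \<in> D \<rightarrow> carrier M"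
    using comps_graded_module(2)[OF assms(1,2)] by blast
  then have "finsum M (comps M x) (degs M x) = finsum M (comps M x) D"
    using assms(3,4) by (intro finsum_zero_extend) (auto simp: degs_def)
  then show ?thesis
    using comps_graded_module(3)[OF assms(1,2)] by simp
qed

locale curved_algebra =
  fixes A :: "('k::field_char_0, 'c) cstruct" (structure)
  assumes curved_assoc: "curved_assoc A"
begin

lemma graded: "graded_module A" and bilinear: "bilinear_product A"
  and predifferential: "predifferential A"
  using curved_assoc by (simp_all add: curved_assoc_def)

sublocale module Kring A
  using graded by (simp add: graded_module_def)

lemma abelian_monoid: "abelian_monoid A"
  by unfold_locales

lemma hom_closed: "x \<in> hom A n \<Longrightarrow> x \<in> carrier A"
  and zero_hom: "\<zero> \<in> hom A n"
  and add_hom: "x \<in> hom A n \<Longrightarrow> y \<in> hom A n \<Longrightarrow> x \<oplus> y \<in> hom A n"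
  and smult_hom: "x \<in> hom A n \<Longrightarrow> c \<odot> x \<in> hom A n"
  using graded by (auto simp: graded_module_def)

lemma mult_closed: "x \<in> carrier A \<Longrightarrow> y \<in> carrier A \<Longrightarrow> x \<otimes> y \<in> carrier A"
  and mult_add_left: "x \<in> carrier A \<Longrightarrow> y \<in> carrier A \<Longrightarrow> z \<in> carrier A \<Longrightarrow>
    (x \<oplus> y) \<otimes> z = x \<otimes> z \<oplus> y \<otimes> z"
  and mult_add_right: "x \<in> carrier A \<Longrightarrow> y \<in> carrier A \<Longrightarrow> z \<in> carrier A \<Longrightarrow>
    z \<otimes> (x \<oplus> y) = z \<otimes> x \<oplus> z \<otimes> y"
  and smult_mult_left: "x \<in> carrier A \<Longrightarrow> y \<in> carrier A \<Longrightarrow> (c \<odot> x) \<otimes> y = c \<odot> (x \<otimes> y)"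
  and smult_mult_right: "x \<in> carrier A \<Longrightarrow> y \<in> carrier A \<Longrightarrow> x \<otimes> (c \<odot> y) = c \<odot> (x \<otimes> y)"
  and mult_hom: "x \<in> hom A p \<Longrightarrow> y \<in> hom A q \<Longrightarrow> x \<otimes> y \<in> hom A (p + q)"
  using bilinear by (simp_all add: bilinear_product_def)

lemma mult_assoc: "x \<in> carrier A \<Longrightarrow> y \<in> carrier A \<Longrightarrow> z \<in> carrier A \<Longrightarrow>
    (x \<otimes> y) \<otimes> z = x \<otimes> (y \<otimes> z)"
  and pd_mult: "x \<in> hom A p \<Longrightarrow> y \<in> carrier A \<Longrightarrow>
    pd A (x \<otimes> y) = pd A x \<otimes> y \<oplus> ksign p \<odot> (x \<otimes> pd A y)"
  and curv_hom: "curv A \<in> hom A (-2)"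
  and pd_pd: "x \<in> carrier A \<Longrightarrow> pd A (pd A x) = curv A \<otimes> x \<ominus> x \<otimes> curv A"
  and pd_curv: "pd A (curv A) = \<zero>"
  using curved_assoc by (simp_all add: curved_assoc_def)

lemma pd_closed: "x \<in> carrier A \<Longrightarrow> pd A x \<in> carrier A"
  and pd_add: "x \<in> carrier A \<Longrightarrow> y \<in> carrier A \<Longrightarrow> pd A (x \<oplus> y) = pd A x \<oplus> pd A y"
  and pd_smult: "x \<in> carrier A \<Longrightarrow> pd A (c \<odot> x) = c \<odot> pd A x"
  and pd_hom: "x \<in> hom A n \<Longrightarrow> pd A x \<in> hom A (n - 1)"
  using predifferential by (simp_all add: predifferential_def)

lemma curv_closed: "curv A \<in> carrier A"
  using curv_hom hom_closed by blast

lemma comps_closed: "x \<in> carrier A \<Longrightarrow> comps A x n \<in> carrier A"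
  using comps_graded_module(2)[OF graded] hom_closed by blast

lemma smult_one_scalar [simp]: "x \<in> carrier A \<Longrightarrow> 1 \<odot> x = x"
  using smult_one[of x] by simp

lemma smult_mult_scalar: "x \<in> carrier A \<Longrightarrow> (a * b) \<odot> x = a \<odot> (b \<odot> x)"
  using smult_assoc1[of a b x] by simp

lemma smult_add_scalar: "x \<in> carrier A \<Longrightarrow> (a + b) \<odot> x = a \<odot> x \<oplus> b \<odot> x"
  using smult_l_distr[of a b x] by simp

lemma smult_zero_scalar: "x \<in> carrier A \<Longrightarrow> 0 \<odot> x = \<zero>"
  using smult_l_null[of x] by simp

lemma mult_zero_left: "y \<in> carrier A \<Longrightarrow> \<zero> \<otimes> y = \<zero>"
  using mult_add_left[of \<zero> \<zero> y] mult_closed[of \<zero> y] by simp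

lemma mult_zero_right: "y \<in> carrier A \<Longrightarrow> y \<otimes> \<zero> = \<zero>"
  using mult_add_right[of \<zero> \<zero> y] mult_closed[of y \<zero>] by simp

lemma pd_zero: "pd A \<zero> = \<zero>"
  using pd_add[of \<zero> \<zero>] pd_closed[of \<zero>] by simp

lemma skew_bracket_closed: "x \<in> carrier A \<Longrightarrow> y \<in> carrier A \<Longrightarrow> skew_bracket A x y \<in> carrier A"
  unfolding skew_bracket_def
  by (intro minus_closed mult_closed finsum_closed Pi_I smult_closed comps_closed) simp_all

lemma skew_bracket_superset:
  assumes x: "x \<in> carrier A" and y: "y \<in> carrier A"
    and P: "finite P" "degs A x \<subseteq> P" and Q: "finite Q" "degs A y \<subseteq> Q"
  shows "skew_bracket A x y =
    x \<otimes> y \<ominus> (\<Oplus>p\<in>P. \<Oplus>q\<in>Q. ksign (p * q) \<odot> (comps A y q \<otimes> comps A x p))"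
proof -
  let ?t = "\<lambda>p q. ksign (p * q) \<odot> (comps A y q \<otimes> comps A x p)"
  have t: "?t p q \<in> carrier A" for p q
    by (simp add: comps_closed mult_closed x y)
  have fin: "finite (degs A x)" "finite (degs A y)"
    using comps_graded_module(1)[OF graded] x y by auto
  have inner: "(\<Oplus>q\<in>degs A y. ?t p q) = (\<Oplus>q\<in>Q. ?t p q)" for p
    using Q t by (intro finsum_zero_extend)
      (auto simp: degs_def mult_zero_left comps_closed x)
  have "(\<Oplus>p\<in>degs A x. \<Oplus>q\<in>Q. ?t p q) = (\<Oplus>p\<in>P. \<Oplus>q\<in>Q. ?t p q)"
    using P t by (intro finsum_zero_extend)
      (auto simp: degs_def mult_zero_right comps_closed y)
  then show ?thesis
    unfolding skew_bracket_def inner by (rule arg_cong)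
qed

end

locale curved_lie_algebra =
  fixes g :: "('k::field_char_0, 'a) cstruct" (structure)
  assumes curved_lie: "curved_lie g"
begin

lemma graded: "graded_module g" and bilinear: "bilinear_product g"
  and predifferential: "predifferential g" and curv_hom: "curv g \<in> hom g (-2)"
  using curved_lie by (simp_all add: curved_lie_def)

lemma module: "module Kring g"
  using graded by (simp add: graded_module_def)

lemma abelian_group: "abelian_group g"
  using module by (rule module.axioms(2))

lemma hom_closed: "x \<in> hom g n \<Longrightarrow> x \<in> carrier g"
  using graded by (auto simp: graded_module_def)

lemma mult_closed: "x \<in> carrier g \<Longrightarrow> y \<in> carrier g \<Longrightarrow> x \<otimes> y \<in> carrier g"
  using bilinear by (simp add: bilinear_product_def)

lemma pd_closed: "x \<in> carrier g \<Longrightarrow> pd g x \<in> carrier g"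
  and pd_hom: "x \<in> hom g n \<Longrightarrow> pd g x \<in> hom g (n - 1)"
  using predifferential by (simp_all add: predifferential_def)

lemma curv_closed: "curv g \<in> carrier g"
  using curv_hom by (rule hom_closed)

end

lemma Skew_simps [simp]:
  "carrier (Skew A) = carrier A" "add (Skew A) = add A" "zero (Skew A) = zero A"
  "smult (Skew A) = smult A" "hom (Skew A) = hom A" "pd (Skew A) = pd A" "curv (Skew A) = curv A"
  "mult (Skew A) = skew_bracket A"
  by (simp_all add: Skew_def)

lemma cmor_closed: "cmor M N f \<Longrightarrow> x \<in> carrier M \<Longrightarrow> f x \<in> carrier N"
  and cmor_add: "cmor M N f \<Longrightarrow> x \<in> carrier M \<Longrightarrow> y \<in> carrier M \<Longrightarrow>
    f (x \<oplus>\<^bsub>M\<^esub> y) = f x \<oplus>\<^bsub>N\<^esub> f y"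
  and cmor_smult: "cmor M N f \<Longrightarrow> x \<in> carrier M \<Longrightarrow> f (c \<odot>\<^bsub>M\<^esub> x) = c \<odot>\<^bsub>N\<^esub> f x"
  and cmor_hom: "cmor M N f \<Longrightarrow> x \<in> hom M n \<Longrightarrow> f x \<in> hom N n"
  and cmor_mult: "cmor M N f \<Longrightarrow> x \<in> carrier M \<Longrightarrow> y \<in> carrier M \<Longrightarrow>
    f (x \<otimes>\<^bsub>M\<^esub> y) = f x \<otimes>\<^bsub>N\<^esub> f y"
  and cmor_pd: "cmor M N f \<Longrightarrow> x \<in> carrier M \<Longrightarrow> f (pd M x) = pd N (f x)"
  and cmor_curv: "cmor M N f \<Longrightarrow> f (curv M) = curv N"
  unfolding cmor_def by simp_all

lemma cmor_zero:
  assumes "abelian_group M" "abelian_group N" "cmor M N f"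
  shows "f \<zero>\<^bsub>M\<^esub> = \<zero>\<^bsub>N\<^esub>"
proof -
  interpret M: abelian_group M by fact
  interpret N: abelian_group N by fact
  show ?thesis
    using cmor_add[OF assms(3), of "\<zero>\<^bsub>M\<^esub>" "\<zero>\<^bsub>M\<^esub>"] cmor_closed[OF assms(3), of "\<zero>\<^bsub>M\<^esub>"]
    by simp
qed

lemma cmor_comp: "cmor M N f \<Longrightarrow> cmor N P f' \<Longrightarrow> cmor M P (\<lambda>x. f' (f x))"
  unfolding cmor_def by auto

lemma cmor_id: "cmor M M (\<lambda>x. x)"
  unfolding cmor_def by auto

text \<open>S is a subobject of the product of the A i: the maps E i jointly reflect equality and
  compute all operations, the grading and the homogeneous components of S.\<close>
locale jointly_embedded =
  fixes S :: "('k::field_char_0, 't) cstruct" and I :: "'i set"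
    and A :: "'i \<Rightarrow> ('k, 'c) cstruct" and E :: "'i \<Rightarrow> 't \<Rightarrow> 'c"
  assumes curved: "i \<in> I \<Longrightarrow> curved_algebra (A i)"
    and E_closed: "i \<in> I \<Longrightarrow> u \<in> carrier S \<Longrightarrow> E i u \<in> carrier (A i)"
    and E_inj: "u \<in> carrier S \<Longrightarrow> v \<in> carrier S \<Longrightarrow> (\<And>i. i \<in> I \<Longrightarrow> E i u = E i v) \<Longrightarrow> u = v"
    and add_closed: "u \<in> carrier S \<Longrightarrow> v \<in> carrier S \<Longrightarrow> u \<oplus>\<^bsub>S\<^esub> v \<in> carrier S"
    and E_add: "i \<in> I \<Longrightarrow> u \<in> carrier S \<Longrightarrow> v \<in> carrier S \<Longrightarrow>
      E i (u \<oplus>\<^bsub>S\<^esub> v) = E i u \<oplus>\<^bsub>A i\<^esub> E i v"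
    and zero_closed: "\<zero>\<^bsub>S\<^esub> \<in> carrier S"
    and E_zero: "i \<in> I \<Longrightarrow> E i \<zero>\<^bsub>S\<^esub> = \<zero>\<^bsub>A i\<^esub>"
    and smult_closed: "u \<in> carrier S \<Longrightarrow> c \<odot>\<^bsub>S\<^esub> u \<in> carrier S"
    and E_smult: "i \<in> I \<Longrightarrow> u \<in> carrier S \<Longrightarrow> E i (c \<odot>\<^bsub>S\<^esub> u) = c \<odot>\<^bsub>A i\<^esub> E i u"
    and mult_closed: "u \<in> carrier S \<Longrightarrow> v \<in> carrier S \<Longrightarrow> u \<otimes>\<^bsub>S\<^esub> v \<in> carrier S"
    and E_mult: "i \<in> I \<Longrightarrow> u \<in> carrier S \<Longrightarrow> v \<in> carrier S \<Longrightarrow>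
      E i (u \<otimes>\<^bsub>S\<^esub> v) = E i u \<otimes>\<^bsub>A i\<^esub> E i v"
    and pd_closed: "u \<in> carrier S \<Longrightarrow> pd S u \<in> carrier S"
    and E_pd: "i \<in> I \<Longrightarrow> u \<in> carrier S \<Longrightarrow> E i (pd S u) = pd (A i) (E i u)"
    and curv_closed: "curv S \<in> carrier S"
    and E_curv: "i \<in> I \<Longrightarrow> E i (curv S) = curv (A i)"
    and hom_eq: "hom S n = {u \<in> carrier S. \<forall>i\<in>I. E i u \<in> hom (A i) n}"
    and comps_exist: "u \<in> carrier S \<Longrightarrow> \<exists>v\<in>carrier S. \<forall>i\<in>I. E i v = comps (A i) (E i u) n"
    and degs_bounded: "u \<in> carrier S \<Longrightarrow> \<exists>D. finite D \<and> (\<forall>i\<in>I. degs (A i) (E i u) \<subseteq> D)"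
begin

lemma abelian_group: "abelian_group S"
proof (rule abelian_groupI)
  fix x y z assume x: "x \<in> carrier S" and y: "y \<in> carrier S" and z: "z \<in> carrier S"
  show "x \<oplus>\<^bsub>S\<^esub> y \<oplus>\<^bsub>S\<^esub> z = x \<oplus>\<^bsub>S\<^esub> (y \<oplus>\<^bsub>S\<^esub> z)"
  proof (rule E_inj)
    fix i assume i: "i \<in> I"
    interpret Ai: curved_algebra "A i" by (rule curved[OF i])
    show "E i (x \<oplus>\<^bsub>S\<^esub> y \<oplus>\<^bsub>S\<^esub> z) = E i (x \<oplus>\<^bsub>S\<^esub> (y \<oplus>\<^bsub>S\<^esub> z))"
      using i x y z by (simp add: E_add add_closed E_closed Ai.a_assoc)
  qed (use x y z in \<open>simp_all add: add_closed\<close>)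
  show "x \<oplus>\<^bsub>S\<^esub> y = y \<oplus>\<^bsub>S\<^esub> x"
  proof (rule E_inj)
    fix i assume i: "i \<in> I"
    interpret Ai: curved_algebra "A i" by (rule curved[OF i])
    show "E i (x \<oplus>\<^bsub>S\<^esub> y) = E i (y \<oplus>\<^bsub>S\<^esub> x)"
      using i x y by (simp add: E_add E_closed Ai.a_comm)
  qed (use x y in \<open>simp_all add: add_closed\<close>)
  show "\<zero>\<^bsub>S\<^esub> \<oplus>\<^bsub>S\<^esub> x = x"
  proof (rule E_inj)
    fix i assume i: "i \<in> I"
    interpret Ai: curved_algebra "A i" by (rule curved[OF i])
    show "E i (\<zero>\<^bsub>S\<^esub> \<oplus>\<^bsub>S\<^esub> x) = E i x"
      using i x by (simp add: E_add E_zero zero_closed E_closed)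
  qed (use x in \<open>simp_all add: add_closed zero_closed\<close>)
  have "(-1) \<odot>\<^bsub>S\<^esub> x \<oplus>\<^bsub>S\<^esub> x = \<zero>\<^bsub>S\<^esub>"
  proof (rule E_inj)
    fix i assume i: "i \<in> I"
    interpret Ai: curved_algebra "A i" by (rule curved[OF i])
    have "(-1) \<odot>\<^bsub>A i\<^esub> E i x \<oplus>\<^bsub>A i\<^esub> E i x = (-1 + 1) \<odot>\<^bsub>A i\<^esub> E i x"
      using Ai.smult_add_scalar[of "E i x" "-1" 1] i x by (simp add: E_closed)
    then show "E i ((-1) \<odot>\<^bsub>S\<^esub> x \<oplus>\<^bsub>S\<^esub> x) = E i \<zero>\<^bsub>S\<^esub>"
      using i x by (simp add: E_add E_smult E_zero smult_closed E_closed Ai.smult_zero_scalar)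
  qed (use x in \<open>simp_all add: add_closed smult_closed zero_closed\<close>)
  then show "\<exists>y\<in>carrier S. y \<oplus>\<^bsub>S\<^esub> x = \<zero>\<^bsub>S\<^esub>"
    using x smult_closed by blast
qed (simp_all add: add_closed zero_closed)

lemma module: "module Kring S"
proof (rule moduleI[OF cring_Kring abelian_group], simp_all only: Kring_simps)
  fix a b :: 'k and x y assume x: "x \<in> carrier S" and y: "y \<in> carrier S"
  show "a \<odot>\<^bsub>S\<^esub> x \<in> carrier S" using x by (rule smult_closed)
  show "(a + b) \<odot>\<^bsub>S\<^esub> x = a \<odot>\<^bsub>S\<^esub> x \<oplus>\<^bsub>S\<^esub> b \<odot>\<^bsub>S\<^esub> x"
    by (rule E_inj) (use x in \<open>simp_all add: E_add E_smult smult_closed add_closed E_closed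
      curved_algebra.smult_add_scalar[OF curved]\<close>)
  show "(a * b) \<odot>\<^bsub>S\<^esub> x = a \<odot>\<^bsub>S\<^esub> (b \<odot>\<^bsub>S\<^esub> x)"
    by (rule E_inj) (use x in \<open>simp_all add: E_smult smult_closed E_closed
      curved_algebra.smult_mult_scalar[OF curved]\<close>)
  show "1 \<odot>\<^bsub>S\<^esub> x = x"
    by (rule E_inj) (use x in \<open>simp_all add: E_smult smult_closed E_closed
      curved_algebra.smult_one_scalar[OF curved]\<close>)
  show "a \<odot>\<^bsub>S\<^esub> (x \<oplus>\<^bsub>S\<^esub> y) = a \<odot>\<^bsub>S\<^esub> x \<oplus>\<^bsub>S\<^esub> a \<odot>\<^bsub>S\<^esub> y"
  proof (rule E_inj)
    fix i assume i: "i \<in> I"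
    interpret Ai: curved_algebra "A i" by (rule curved[OF i])
    show "E i (a \<odot>\<^bsub>S\<^esub> (x \<oplus>\<^bsub>S\<^esub> y)) = E i (a \<odot>\<^bsub>S\<^esub> x \<oplus>\<^bsub>S\<^esub> a \<odot>\<^bsub>S\<^esub> y)"
      using i x y Ai.smult_r_distr[of a]
      by (simp add: E_add E_smult smult_closed add_closed E_closed)
  qed (use x y in \<open>simp_all add: add_closed smult_closed\<close>)
qed

lemma E_minus: "i \<in> I \<Longrightarrow> u \<in> carrier S \<Longrightarrow> v \<in> carrier S \<Longrightarrow>
    E i (u \<ominus>\<^bsub>S\<^esub> v) = E i u \<ominus>\<^bsub>A i\<^esub> E i v"
proof -
  assume i: "i \<in> I" and u: "u \<in> carrier S" and v: "v \<in> carrier S"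
  interpret S: abelian_group S by (rule abelian_group)
  interpret Ai: curved_algebra "A i" by (rule curved[OF i])
  have "E i (\<ominus>\<^bsub>S\<^esub> v) \<oplus>\<^bsub>A i\<^esub> E i v = \<zero>\<^bsub>A i\<^esub>"
    using E_add[OF i S.a_inv_closed[OF v] v] i v by (metis E_zero S.l_neg)
  then have "E i (\<ominus>\<^bsub>S\<^esub> v) = \<ominus>\<^bsub>A i\<^esub> E i v"
    using i v by (simp add: Ai.add.inv_equality E_closed)
  then show ?thesis
    using i u v by (simp add: a_minus_def E_add)
qed

lemma E_finsum: "i \<in> I \<Longrightarrow> finite F \<Longrightarrow> c \<in> F \<rightarrow> carrier S \<Longrightarrow>
    E i (finsum S c F) = (\<Oplus>\<^bsub>A i\<^esub>n\<in>F. E i (c n))"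
  using abelian_group curved_algebra.abelian_monoid[OF curved]
  by (intro additive_finsum) (auto simp: abelian_group_def E_closed E_add E_zero)

lemma hom_closed: "u \<in> hom S n \<Longrightarrow> u \<in> carrier S"
  using hom_eq by blast

lemma homogeneous_decomposition:
  assumes x: "x \<in> carrier S"
  obtains D c where "finite D" "\<And>n. n \<notin> D \<Longrightarrow> c n = \<zero>\<^bsub>S\<^esub>" "\<And>n. c n \<in> hom S n"
    "x = finsum S c D"
proof -
  interpret S: abelian_group S by (rule abelian_group)
  have "\<forall>n. \<exists>v. v \<in> carrier S \<and> (\<forall>i\<in>I. E i v = comps (A i) (E i x) n)"
    using comps_exist[OF x] by blast
  then obtain c where "\<forall>n. c n \<in> carrier S \<and> (\<forall>i\<in>I. E i (c n) = comps (A i) (E i x) n)"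
    by (auto dest: choice)
  then have c: "\<And>n. c n \<in> carrier S" "\<And>n i. i \<in> I \<Longrightarrow> E i (c n) = comps (A i) (E i x) n"
    by auto
  obtain D where D: "finite D" "\<And>i. i \<in> I \<Longrightarrow> degs (A i) (E i x) \<subseteq> D"
    using degs_bounded[OF x] by blast
  have zero: "c n = \<zero>\<^bsub>S\<^esub>" if "n \<notin> D" for n
  proof (rule E_inj)
    fix i assume i: "i \<in> I"
    have "n \<notin> degs (A i) (E i x)" using D(2)[OF i] that by blast
    then show "E i (c n) = E i \<zero>\<^bsub>S\<^esub>" using c i by (simp add: E_zero degs_def)
  qed (use c zero_closed in auto)
  have hom: "c n \<in> hom S n" for n
    using c hom_eq comps_graded_module(2)[OF curved_algebra.graded[OF curved] E_closed[OF _ x]]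
    by auto
  have sum: "x = finsum S c D"
  proof (rule E_inj[OF x])
    show "finsum S c D \<in> carrier S" using c by (auto intro: S.finsum_closed)
    fix i assume i: "i \<in> I"
    have "E i (finsum S c D) = (\<Oplus>\<^bsub>A i\<^esub>n\<in>D. comps (A i) (E i x) n)"
      using E_finsum[OF i D(1)] c i by auto
    also have "\<dots> = E i x"
      using curved_algebra.graded[OF curved[OF i]] E_closed[OF i x] D(1) D(2)[OF i]
      by (rule finsum_comps_superset)
    finally show "E i x = E i (finsum S c D)" by simp
  qed
  show ?thesis by (rule that[OF D(1) zero hom sum])
qed

lemma comps_E_decomposition:
  assumes i: "i \<in> I" and D: "finite D" "\<And>n. n \<notin> D \<Longrightarrow> c n = \<zero>\<^bsub>S\<^esub>"
    and hom: "\<And>n. c n \<in> hom S n" and u: "u = finsum S c D"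
  shows "comps (A i) (E i u) n = E i (c n)"
proof -
  interpret Ai: curved_algebra "A i" by (rule curved[OF i])
  have "comps (A i) (E i u) = (\<lambda>n. E i (c n))"
  proof (rule comps_eqI[OF Ai.graded D(1)])
    show "\<And>n. n \<notin> D \<Longrightarrow> E i (c n) = \<zero>\<^bsub>A i\<^esub>" using D(2) E_zero i by simp
    show "\<And>n. E i (c n) \<in> hom (A i) n" using hom hom_eq i by auto
    show "E i u = (\<Oplus>\<^bsub>A i\<^esub>n\<in>D. E i (c n))"
      unfolding u by (rule E_finsum[OF i D(1)]) (use hom hom_closed in blast)
  qed
  then show ?thesis by simp
qed

lemma decomposition_unique:
  assumes "finite D" "\<And>n. n \<notin> D \<Longrightarrow> c n = \<zero>\<^bsub>S\<^esub>" "\<And>n. c n \<in> hom S n" "x = finsum S c D"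
    and "finite D'" "\<And>n. n \<notin> D' \<Longrightarrow> c' n = \<zero>\<^bsub>S\<^esub>" "\<And>n. c' n \<in> hom S n" "x = finsum S c' D'"
  shows "c' = c"
proof
  fix n
  show "c' n = c n"
  proof (rule E_inj)
    fix i assume i: "i \<in> I"
    have "E i (c' n) = comps (A i) (E i x) n"
      by (rule comps_E_decomposition[OF i assms(5-8), symmetric])
    also have "\<dots> = E i (c n)"
      by (rule comps_E_decomposition[OF i assms(1-4)])
    finally show "E i (c' n) = E i (c n)" .
  qed (use assms(3,7) hom_closed in blast)+
qed

lemma graded: "graded_module S"
  unfolding graded_module_def
proof (intro conjI allI ballI)
  show "module Kring S" by (rule module)
  fix n
  show "hom S n \<subseteq> carrier S" using hom_eq by blast
  show "\<zero>\<^bsub>S\<^esub> \<in> hom S n"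
    using hom_eq zero_closed E_zero curved_algebra.zero_hom[OF curved] by simp
  show "\<And>x y. x \<in> hom S n \<Longrightarrow> y \<in> hom S n \<Longrightarrow> x \<oplus>\<^bsub>S\<^esub> y \<in> hom S n"
    using hom_eq add_closed E_add curved_algebra.add_hom[OF curved] by simp
  show "\<And>c x. x \<in> hom S n \<Longrightarrow> c \<odot>\<^bsub>S\<^esub> x \<in> hom S n"
    using hom_eq smult_closed E_smult curved_algebra.smult_hom[OF curved] by simp
next
  fix x assume x: "x \<in> carrier S"
  obtain D c where c: "finite D" "\<And>n. n \<notin> D \<Longrightarrow> c n = \<zero>\<^bsub>S\<^esub>" "\<And>n. c n \<in> hom S n"
    "x = finsum S c D"
    by (rule homogeneous_decomposition[OF x]) (rule that)
  interpret S: abelian_group S by (rule abelian_group)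
  have supp: "{n. c n \<noteq> \<zero>\<^bsub>S\<^esub>} \<subseteq> D" using c(2) by blast
  have "finsum S c {n. c n \<noteq> \<zero>\<^bsub>S\<^esub>} = finsum S c D"
    using c(1,3) supp hom_closed by (intro S.finsum_zero_extend) auto
  then have "finite {n. c n \<noteq> \<zero>\<^bsub>S\<^esub>} \<and> (\<forall>n. c n \<in> hom S n) \<and> x = finsum S c {n. c n \<noteq> \<zero>\<^bsub>S\<^esub>}"
    using finite_subset[OF supp c(1)] c(3,4) by simp
  moreover have "c' = c"
    if "finite {n. c' n \<noteq> \<zero>\<^bsub>S\<^esub>} \<and> (\<forall>n. c' n \<in> hom S n) \<and> x = finsum S c' {n. c' n \<noteq> \<zero>\<^bsub>S\<^esub>}"
    for c'
    using that by (intro decomposition_unique[OF c, of "{n. c' n \<noteq> \<zero>\<^bsub>S\<^esub>}"]) auto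
  ultimately show "\<exists>!c. finite {n. c n \<noteq> \<zero>\<^bsub>S\<^esub>} \<and> (\<forall>n. c n \<in> hom S n) \<and> x = finsum S c {n. c n \<noteq> \<zero>\<^bsub>S\<^esub>}"
    by (rule ex1I)
qed

lemma E_comps:
  assumes i: "i \<in> I" and u: "u \<in> carrier S"
  shows "E i (comps S u n) = comps (A i) (E i u) n"
proof -
  note c = comps_graded_module[OF graded u]
  have "\<And>n. n \<notin> degs S u \<Longrightarrow> comps S u n = \<zero>\<^bsub>S\<^esub>" by (simp add: degs_def)
  from comps_E_decomposition[OF i c(1) this c(2) c(3)] show ?thesis by simp
qed

lemma degs_E_subset:
  assumes "i \<in> I" "u \<in> carrier S"
  shows "degs (A i) (E i u) \<subseteq> degs S u"
  using E_comps[OF assms, symmetric] E_zero[OF assms(1)] by (auto simp: degs_def)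

lemma bilinear: "bilinear_product S"
  unfolding bilinear_product_def
proof (intro conjI ballI allI)
  fix x y z assume x: "x \<in> carrier S" and y: "y \<in> carrier S" and z: "z \<in> carrier S"
  show "x \<otimes>\<^bsub>S\<^esub> y \<in> carrier S" using x y by (rule mult_closed)
  show "(x \<oplus>\<^bsub>S\<^esub> y) \<otimes>\<^bsub>S\<^esub> z = x \<otimes>\<^bsub>S\<^esub> z \<oplus>\<^bsub>S\<^esub> y \<otimes>\<^bsub>S\<^esub> z"
    by (rule E_inj) (use x y z in \<open>simp_all add: mult_closed add_closed E_mult E_add E_closed
      curved_algebra.mult_add_left[OF curved]\<close>)
  show "z \<otimes>\<^bsub>S\<^esub> (x \<oplus>\<^bsub>S\<^esub> y) = z \<otimes>\<^bsub>S\<^esub> x \<oplus>\<^bsub>S\<^esub> z \<otimes>\<^bsub>S\<^esub> y"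
    by (rule E_inj) (use x y z in \<open>simp_all add: mult_closed add_closed E_mult E_add E_closed
      curved_algebra.mult_add_right[OF curved]\<close>)
next
  fix c x y assume x: "x \<in> carrier S" and y: "y \<in> carrier S"
  show "c \<odot>\<^bsub>S\<^esub> x \<otimes>\<^bsub>S\<^esub> y = c \<odot>\<^bsub>S\<^esub> (x \<otimes>\<^bsub>S\<^esub> y)"
    by (rule E_inj) (use x y in \<open>simp_all add: mult_closed smult_closed E_mult E_smult E_closed
      curved_algebra.smult_mult_left[OF curved]\<close>)
  show "x \<otimes>\<^bsub>S\<^esub> (c \<odot>\<^bsub>S\<^esub> y) = c \<odot>\<^bsub>S\<^esub> (x \<otimes>\<^bsub>S\<^esub> y)"
    by (rule E_inj) (use x y in \<open>simp_all add: mult_closed smult_closed E_mult E_smult E_closed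
      curved_algebra.smult_mult_right[OF curved]\<close>)
next
  fix p q x y assume "x \<in> hom S p" "y \<in> hom S q"
  then show "x \<otimes>\<^bsub>S\<^esub> y \<in> hom S (p + q)"
    using hom_eq mult_closed E_mult curved_algebra.mult_hom[OF curved] by simp
qed

lemma predifferential: "predifferential S"
  unfolding predifferential_def
proof (intro conjI ballI allI)
  fix x y assume x: "x \<in> carrier S" and y: "y \<in> carrier S"
  show "pd S x \<in> carrier S" using x by (rule pd_closed)
  show "pd S (x \<oplus>\<^bsub>S\<^esub> y) = pd S x \<oplus>\<^bsub>S\<^esub> pd S y"
    by (rule E_inj) (use x y in \<open>simp_all add: pd_closed add_closed E_pd E_add E_closed
      curved_algebra.pd_add[OF curved]\<close>)
next
  fix c x assume x: "x \<in> carrier S"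
  show "pd S (c \<odot>\<^bsub>S\<^esub> x) = c \<odot>\<^bsub>S\<^esub> pd S x"
    by (rule E_inj) (use x in \<open>simp_all add: pd_closed smult_closed E_pd E_smult E_closed
      curved_algebra.pd_smult[OF curved]\<close>)
next
  fix n x assume "x \<in> hom S n"
  then show "pd S x \<in> hom S (n - 1)"
    using hom_eq pd_closed E_pd curved_algebra.pd_hom[OF curved] by simp
qed

lemma curved_assoc: "curved_assoc S"
  unfolding curved_assoc_def
proof (intro conjI ballI allI)
  show "graded_module S" by (rule graded)
  show "bilinear_product S" by (rule bilinear)
  show "predifferential S" by (rule predifferential)
  show "curv S \<in> hom S (-2)"
    using hom_eq curv_closed E_curv curved_algebra.curv_hom[OF curved] by simp
  show "pd S (curv S) = \<zero>\<^bsub>S\<^esub>"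
    by (rule E_inj) (simp_all add: pd_closed curv_closed zero_closed E_pd E_curv E_zero
      curved_algebra.pd_curv[OF curved])
next
  fix x y z assume x: "x \<in> carrier S" and y: "y \<in> carrier S" and z: "z \<in> carrier S"
  show "x \<otimes>\<^bsub>S\<^esub> y \<otimes>\<^bsub>S\<^esub> z = x \<otimes>\<^bsub>S\<^esub> (y \<otimes>\<^bsub>S\<^esub> z)"
    by (rule E_inj) (use x y z in \<open>simp_all add: mult_closed E_mult E_closed
      curved_algebra.mult_assoc[OF curved]\<close>)
next
  fix x assume x: "x \<in> carrier S"
  interpret S: abelian_group S by (rule abelian_group)
  show "pd S (pd S x) = curv S \<otimes>\<^bsub>S\<^esub> x \<ominus>\<^bsub>S\<^esub> x \<otimes>\<^bsub>S\<^esub> curv S"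
    by (rule E_inj) (use x in \<open>simp_all add: pd_closed mult_closed curv_closed E_pd E_mult E_curv
      E_minus E_closed curved_algebra.pd_pd[OF curved]\<close>)
next
  fix p x y assume x: "x \<in> hom S p" and y: "y \<in> carrier S"
  have xc: "x \<in> carrier S" using x by (rule hom_closed)
  show "pd S (x \<otimes>\<^bsub>S\<^esub> y) = pd S x \<otimes>\<^bsub>S\<^esub> y \<oplus>\<^bsub>S\<^esub> ksign p \<odot>\<^bsub>S\<^esub> (x \<otimes>\<^bsub>S\<^esub> pd S y)"
  proof (rule E_inj)
    fix i assume i: "i \<in> I"
    have "E i x \<in> hom (A i) p" using x hom_eq i by blast
    then show "E i (pd S (x \<otimes>\<^bsub>S\<^esub> y)) =
        E i (pd S x \<otimes>\<^bsub>S\<^esub> y \<oplus>\<^bsub>S\<^esub> ksign p \<odot>\<^bsub>S\<^esub> (x \<otimes>\<^bsub>S\<^esub> pd S y))"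
      using i xc y by (simp add: pd_closed mult_closed add_closed smult_closed E_pd E_mult E_add
          E_smult E_closed curved_algebra.pd_mult[OF curved])
  qed (use xc y in \<open>simp_all add: pd_closed mult_closed add_closed smult_closed\<close>)
qed

lemma cmor_E: "i \<in> I \<Longrightarrow> cmor S (A i) (E i)"
  unfolding cmor_def using E_closed E_add E_smult hom_eq E_mult E_pd E_curv by auto

lemma comps_closed: "u \<in> carrier S \<Longrightarrow> comps S u n \<in> carrier S"
  using comps_graded_module(2)[OF graded] hom_closed by blast

lemma E_skew_bracket:
  assumes i: "i \<in> I" and u: "u \<in> carrier S" and v: "v \<in> carrier S"
  shows "E i (skew_bracket S u v) = skew_bracket (A i) (E i u) (E i v)"
proof -
  interpret S: abelian_group S by (rule abelian_group)
  interpret Ai: curved_algebra "A i" by (rule curved[OF i])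
  have fin: "finite (degs S u)" "finite (degs S v)"
    using comps_graded_module(1)[OF graded] u v by auto
  let ?t = "\<lambda>p q. ksign (p * q) \<odot>\<^bsub>S\<^esub> (comps S v q \<otimes>\<^bsub>S\<^esub> comps S u p)"
  let ?tA = "\<lambda>p q. ksign (p * q) \<odot>\<^bsub>A i\<^esub> (comps (A i) (E i v) q \<otimes>\<^bsub>A i\<^esub> comps (A i) (E i u) p)"
  have t: "?t p q \<in> carrier S" for p q
    using u v by (simp add: smult_closed mult_closed comps_closed)
  have inner: "E i (\<Oplus>\<^bsub>S\<^esub>q\<in>degs S v. ?t p q) = (\<Oplus>\<^bsub>A i\<^esub>q\<in>degs S v. ?tA p q)" for p
    using E_finsum[OF i fin(2), of "?t p"] t i u v
    by (simp add: E_smult E_mult E_comps mult_closed comps_closed)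
  have "E i (skew_bracket S u v) = E i (u \<otimes>\<^bsub>S\<^esub> v) \<ominus>\<^bsub>A i\<^esub> E i (\<Oplus>\<^bsub>S\<^esub>p\<in>degs S u. \<Oplus>\<^bsub>S\<^esub>q\<in>degs S v. ?t p q)"
    unfolding skew_bracket_def using t
    by (intro E_minus[OF i] mult_closed u v S.finsum_closed) auto
  also have "\<dots> = E i u \<otimes>\<^bsub>A i\<^esub> E i v \<ominus>\<^bsub>A i\<^esub> (\<Oplus>\<^bsub>A i\<^esub>p\<in>degs S u. \<Oplus>\<^bsub>A i\<^esub>q\<in>degs S v. ?tA p q)"
    using E_finsum[OF i fin(1)] t inner i u v by (simp add: E_mult)
  also have "\<dots> = skew_bracket (A i) (E i u) (E i v)"
    using fin degs_E_subset[OF i] i u v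
    by (intro Ai.skew_bracket_superset[symmetric]) (simp_all add: E_closed)
  finally show ?thesis .
qed

lemma cmor_SkewI:
  assumes g: "curved_lie_algebra g"
    and closed: "\<And>x. x \<in> carrier g \<Longrightarrow> \<eta> x \<in> carrier S"
    and E_\<eta>: "\<And>i x. i \<in> I \<Longrightarrow> x \<in> carrier g \<Longrightarrow> E i (\<eta> x) = F i x"
    and F: "\<And>i. i \<in> I \<Longrightarrow> cmor g (Skew (A i)) (F i)"
  shows "cmor g (Skew S) \<eta>"
proof -
  interpret g: curved_lie_algebra g by (rule g)
  interpret gm: module Kring g by (rule g.module)
  interpret S: curved_algebra S by (rule curved_algebra.intro[OF curved_assoc])
  show ?thesis
    unfolding cmor_def Skew_simps
  proof (intro conjI ballI allI)
    fix x y assume x: "x \<in> carrier g" and y: "y \<in> carrier g"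
    show "\<eta> x \<in> carrier S" using x by (rule closed)
    show "\<eta> (x \<oplus>\<^bsub>g\<^esub> y) = \<eta> x \<oplus>\<^bsub>S\<^esub> \<eta> y"
      by (rule E_inj)
        (use x y in \<open>simp_all add: closed add_closed E_add E_\<eta> cmor_add[OF F] gm.a_closed\<close>)
    show "\<eta> (x \<otimes>\<^bsub>g\<^esub> y) = skew_bracket S (\<eta> x) (\<eta> y)"
      by (rule E_inj) (use x y in \<open>simp_all add: closed g.mult_closed E_skew_bracket
        E_\<eta> cmor_mult[OF F] S.skew_bracket_closed\<close>)
    show "\<eta> (pd g x) = pd S (\<eta> x)"
      by (rule E_inj) (use x in \<open>simp_all add: closed pd_closed g.pd_closed E_pd E_\<eta> cmor_pd[OF F]\<close>)
  next
    fix c x assume x: "x \<in> carrier g"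
    show "\<eta> (c \<odot>\<^bsub>g\<^esub> x) = c \<odot>\<^bsub>S\<^esub> \<eta> x"
      by (rule E_inj)
        (use x in \<open>simp_all add: closed smult_closed E_smult E_\<eta> cmor_smult[OF F] gm.smult_closed\<close>)
  next
    fix n x assume x: "x \<in> hom g n"
    then show "\<eta> x \<in> hom S n"
      using hom_eq closed E_\<eta> cmor_hom[OF F] g.hom_closed by simp
  next
    show "\<eta> (curv g) = curv S"
      by (rule E_inj) (simp_all add: closed g.curv_closed curv_closed E_curv E_\<eta> cmor_curv[OF F])
  qed
qed

end

definition homogeneous :: "('k::field_char_0, 'a) cstruct \<Rightarrow> 'a set" where
  "homogeneous g = (\<Union>n. hom g n)"

text \<open>Zero lies in every component, so its degree is arbitrary; since zero evaluates to zero
  in every algebra, nothing below depends on that choice.\<close>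
definition degree :: "('k::field_char_0, 'a) cstruct \<Rightarrow> 'a \<Rightarrow> int" where
  "degree g x = (SOME n. x \<in> hom g n)"

text \<open>Words are nonempty because curved algebras need not have a unit.\<close>
definition wf_term :: "('k::field_char_0, 'a) cstruct \<Rightarrow> ('k, 'a) uea_carrier \<Rightarrow> bool" where
  "wf_term g r \<longleftrightarrow> (\<forall>p\<in>set r. snd p \<noteq> [] \<and> set (snd p) \<subseteq> homogeneous g)"

fun eval_word :: "('k, 'c) cstruct \<Rightarrow> ('a \<Rightarrow> 'c) \<Rightarrow> 'a list \<Rightarrow> 'c" where
  "eval_word A f [] = \<zero>\<^bsub>A\<^esub>"
| "eval_word A f [x] = f x"
| "eval_word A f (x # y # w) = f x \<otimes>\<^bsub>A\<^esub> eval_word A f (y # w)"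

fun eval_term :: "('k, 'c) cstruct \<Rightarrow> ('a \<Rightarrow> 'c) \<Rightarrow> ('k \<times> 'a list) list \<Rightarrow> 'c" where
  "eval_term A f [] = \<zero>\<^bsub>A\<^esub>"
| "eval_term A f (p # r) = fst p \<odot>\<^bsub>A\<^esub> eval_word A f (snd p) \<oplus>\<^bsub>A\<^esub> eval_term A f r"

lemma eval_word_Cons: "v \<noteq> [] \<Longrightarrow> eval_word A f (x # v) = f x \<otimes>\<^bsub>A\<^esub> eval_word A f v"
  by (cases v) auto

definition word_degree :: "('k::field_char_0, 'a) cstruct \<Rightarrow> 'a list \<Rightarrow> int" where
  "word_degree g w = sum_list (map (degree g) w)"

definition term_component ::
  "('k::field_char_0, 'a) cstruct \<Rightarrow> int \<Rightarrow> ('k, 'a) uea_carrier \<Rightarrow> ('k, 'a) uea_carrier" where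
  "term_component g n r = filter (\<lambda>p. word_degree g (snd p) = n) r"

definition term_smult :: "'k::field_char_0 \<Rightarrow> ('k, 'a) uea_carrier \<Rightarrow> ('k, 'a) uea_carrier" where
  "term_smult c r = map (\<lambda>p. (c * fst p, snd p)) r"

definition term_mult ::
  "('k::field_char_0, 'a) uea_carrier \<Rightarrow> ('k, 'a) uea_carrier \<Rightarrow> ('k, 'a) uea_carrier" where
  "term_mult r s = concat (map (\<lambda>p. map (\<lambda>q. (fst p * fst q, snd p @ snd q)) s) r)"

fun word_pd :: "('k::field_char_0, 'a) cstruct \<Rightarrow> 'a list \<Rightarrow> ('k, 'a) uea_carrier" where
  "word_pd g [] = []"
| "word_pd g [x] = [(1, [pd g x])]"
| "word_pd g (x # y # w) =
    (1, pd g x # y # w) # map (\<lambda>q. (ksign (degree g x) * fst q, x # snd q)) (word_pd g (y # w))"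

definition term_pd ::
  "('k::field_char_0, 'a) cstruct \<Rightarrow> ('k, 'a) uea_carrier \<Rightarrow> ('k, 'a) uea_carrier" where
  "term_pd g r = concat (map (\<lambda>p. term_smult (fst p) (word_pd g (snd p))) r)"

definition term_of :: "('k::field_char_0, 'a) cstruct \<Rightarrow> 'a \<Rightarrow> ('k, 'a) uea_carrier" where
  "term_of g x = map (\<lambda>n. (1, [comps g x n])) (sorted_list_of_set (degs g x))"

lemma term_mult_simps [simp]:
  "term_mult [] s = []"
  "term_mult (p # r) s = map (\<lambda>q. (fst p * fst q, snd p @ snd q)) s @ term_mult r s"
  by (simp_all add: term_mult_def)

lemma term_pd_simps [simp]:
  "term_pd g [] = []" "term_pd g (p # r) = term_smult (fst p) (word_pd g (snd p)) @ term_pd g r"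
  by (simp_all add: term_pd_def)

lemma term_smult_simps [simp]:
  "term_smult c [] = []" "term_smult c (p # r) = (c * fst p, snd p) # term_smult c r"
  by (simp_all add: term_smult_def)

lemma term_component_simps [simp]:
  "term_component g n [] = []"
  "term_component g n (p # r) =
    (if word_degree g (snd p) = n then p # term_component g n r else term_component g n r)"
  by (simp_all add: term_component_def)

lemma word_degree_simps [simp]:
  "word_degree g [] = 0" "word_degree g (x # w) = degree g x + word_degree g w"
  by (simp_all add: word_degree_def)

lemma wf_term_simps [simp]:
  "wf_term g []"
  "wf_term g (p # r) \<longleftrightarrow> snd p \<noteq> [] \<and> set (snd p) \<subseteq> homogeneous g \<and> wf_term g r"
  "wf_term g (r @ s) \<longleftrightarrow> wf_term g r \<and> wf_term g s"
  by (auto simp: wf_term_def)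

lemma wf_term_smult [simp]: "wf_term g (term_smult c r) \<longleftrightarrow> wf_term g r"
  by (induction r) auto

lemma wf_term_prefix: "set w \<subseteq> homogeneous g \<Longrightarrow> wf_term g s \<Longrightarrow>
    wf_term g (map (\<lambda>q. (c * fst q, w @ snd q)) s)"
  by (induction s) auto

lemma wf_term_mult: "wf_term g r \<Longrightarrow> wf_term g s \<Longrightarrow> wf_term g (term_mult r s)"
  by (induction r) (auto intro: wf_term_prefix)

lemma wf_term_component: "wf_term g r \<Longrightarrow> wf_term g (term_component g n r)"
  by (induction r) auto

lemma term_component_eq_Nil: "n \<notin> (\<lambda>p. word_degree g (snd p)) ` set r \<Longrightarrow> term_component g n r = []"
  by (induction r) auto

lemma wf_term_word_pd:
  assumes "\<And>x. x \<in> homogeneous g \<Longrightarrow> pd g x \<in> homogeneous g"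
  shows "set w \<subseteq> homogeneous g \<Longrightarrow> wf_term g (word_pd g w)"
proof (induction w)
  case (Cons x w)
  then show ?case
    by (cases w) (auto simp: assms intro: wf_term_prefix[of "[x]", simplified])
qed simp

context curved_lie_algebra
begin

lemma homogeneous_hom: "x \<in> homogeneous g \<Longrightarrow> x \<in> hom g (degree g x)"
  unfolding homogeneous_def degree_def by (rule someI_ex) simp

lemma homogeneous_closed: "x \<in> homogeneous g \<Longrightarrow> x \<in> carrier g"
  using homogeneous_hom hom_closed by blast

lemma homogeneous_pd: "x \<in> homogeneous g \<Longrightarrow> pd g x \<in> homogeneous g"
  using homogeneous_hom pd_hom unfolding homogeneous_def by blast

lemma comps_homogeneous: "x \<in> carrier g \<Longrightarrow> comps g x n \<in> homogeneous g"
  using comps_graded_module(2)[OF graded] unfolding homogeneous_def by blast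

lemma wf_term_pd: "wf_term g r \<Longrightarrow> wf_term g (term_pd g r)"
  by (induction r) (auto intro: wf_term_word_pd homogeneous_pd)

lemma wf_term_of: "x \<in> carrier g \<Longrightarrow> wf_term g (term_of g x)"
  unfolding term_of_def wf_term_def by (auto simp: comps_homogeneous)

lemma wf_curv_term: "wf_term g [(1, [curv g])]"
  using curv_hom by (auto simp: homogeneous_def)

end

locale lie_map_to_skew = curved_lie_algebra g + A: curved_algebra A
  for g :: "('k::field_char_0, 'a) cstruct" and A :: "('k, 'c) cstruct" +
  fixes f :: "'a \<Rightarrow> 'c"
  assumes f_cmor: "cmor g (Skew A) f"
begin

lemma f_closed: "x \<in> carrier g \<Longrightarrow> f x \<in> carrier A"
  and f_add: "x \<in> carrier g \<Longrightarrow> y \<in> carrier g \<Longrightarrow> f (x \<oplus>\<^bsub>g\<^esub> y) = f x \<oplus>\<^bsub>A\<^esub> f y"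
  and f_hom: "x \<in> hom g n \<Longrightarrow> f x \<in> hom A n"
  and f_pd: "x \<in> carrier g \<Longrightarrow> f (pd g x) = pd A (f x)"
  and f_curv: "f (curv g) = curv A"
  using f_cmor unfolding cmor_def by simp_all

lemma f_zero: "f \<zero>\<^bsub>g\<^esub> = \<zero>\<^bsub>A\<^esub>"
proof -
  interpret g: abelian_group g by (rule abelian_group)
  show ?thesis
    using f_add[of "\<zero>\<^bsub>g\<^esub>" "\<zero>\<^bsub>g\<^esub>"] f_closed[of "\<zero>\<^bsub>g\<^esub>"] by simp
qed

lemma eval_word_closed: "set w \<subseteq> homogeneous g \<Longrightarrow> eval_word A f w \<in> carrier A"
proof (induction w)
  case (Cons x w)
  then show ?case
    by (cases "w = []") (simp_all add: eval_word_Cons f_closed homogeneous_closed A.mult_closed)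
qed simp

lemma eval_term_closed: "wf_term g r \<Longrightarrow> eval_term A f r \<in> carrier A"
  by (induction r) (auto simp: eval_word_closed)

lemma eval_word_append:
  "v \<noteq> [] \<Longrightarrow> w \<noteq> [] \<Longrightarrow> set v \<subseteq> homogeneous g \<Longrightarrow> set w \<subseteq> homogeneous g \<Longrightarrow>
    eval_word A f (v @ w) = eval_word A f v \<otimes>\<^bsub>A\<^esub> eval_word A f w"
proof (induction v)
  case (Cons x v)
  then show ?case
    by (cases "v = []")
      (simp_all add: eval_word_Cons A.mult_assoc f_closed homogeneous_closed eval_word_closed)
qed simp

lemma eval_term_append:
  "wf_term g r \<Longrightarrow> wf_term g s \<Longrightarrow> eval_term A f (r @ s) = eval_term A f r \<oplus>\<^bsub>A\<^esub> eval_term A f s"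
  by (induction r) (auto simp: eval_term_closed eval_word_closed A.a_assoc)

lemma eval_term_smult: "wf_term g r \<Longrightarrow> eval_term A f (term_smult c r) = c \<odot>\<^bsub>A\<^esub> eval_term A f r"
  by (induction r)
    (auto simp: eval_term_closed eval_word_closed A.smult_r_distr A.smult_mult_scalar)

lemma eval_term_prefix:
  assumes "w \<noteq> []" "set w \<subseteq> homogeneous g"
  shows "wf_term g s \<Longrightarrow>
    eval_term A f (map (\<lambda>q. (c * fst q, w @ snd q)) s) = c \<odot>\<^bsub>A\<^esub> (eval_word A f w \<otimes>\<^bsub>A\<^esub> eval_term A f s)"
proof (induction s)
  case Nil
  then show ?case using A.mult_zero_right[OF eval_word_closed[OF assms(2)]] by simp
next
  case (Cons q s)
  then show ?case
    using assms eval_word_closed[OF assms(2)]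
    by (simp add: eval_word_append eval_word_closed eval_term_closed A.mult_add_right
        A.smult_mult_right A.mult_closed A.smult_mult_scalar A.smult_r_distr)
qed

lemma eval_term_mult:
  "wf_term g r \<Longrightarrow> wf_term g s \<Longrightarrow> eval_term A f (term_mult r s) = eval_term A f r \<otimes>\<^bsub>A\<^esub> eval_term A f s"
proof (induction r)
  case Nil
  then show ?case using A.mult_zero_left[OF eval_term_closed] by simp
next
  case (Cons p r)
  then show ?case
    by (simp add: eval_term_append wf_term_prefix wf_term_mult eval_term_prefix eval_word_closed
        eval_term_closed A.mult_add_left A.smult_mult_left)
qed

lemma eval_word_pd:
  "w \<noteq> [] \<Longrightarrow> set w \<subseteq> homogeneous g \<Longrightarrow> eval_term A f (word_pd g w) = pd A (eval_word A f w)"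
proof (induction w)
  case (Cons x w)
  then have x: "x \<in> homogeneous g" and w: "set w \<subseteq> homogeneous g" by auto
  have fx: "f x \<in> hom A (degree g x)" using f_hom homogeneous_hom[OF x] .
  show ?case
  proof (cases "w = []")
    case True
    then show ?thesis
      using x by (simp add: f_pd f_closed homogeneous_closed A.pd_closed)
  next
    case False
    then obtain y w' where yw: "w = y # w'" by (cases w) auto
    have wf: "wf_term g (word_pd g w)"
      using w by (intro wf_term_word_pd homogeneous_pd)
    have "eval_term A f (word_pd g (x # w)) =
        f (pd g x) \<otimes>\<^bsub>A\<^esub> eval_word A f w \<oplus>\<^bsub>A\<^esub> ksign (degree g x) \<odot>\<^bsub>A\<^esub> (f x \<otimes>\<^bsub>A\<^esub> eval_term A f (word_pd g w))"
      using x w wf homogeneous_pd[OF x] eval_term_prefix[of "[x]", simplified]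
      unfolding yw
      by (simp add: f_closed homogeneous_closed eval_word_closed A.mult_closed)
    also have "\<dots> = pd A (f x) \<otimes>\<^bsub>A\<^esub> eval_word A f w \<oplus>\<^bsub>A\<^esub>
        ksign (degree g x) \<odot>\<^bsub>A\<^esub> (f x \<otimes>\<^bsub>A\<^esub> pd A (eval_word A f w))"
      using Cons.IH False w x by (simp add: f_pd homogeneous_closed)
    also have "\<dots> = pd A (eval_word A f (x # w))"
      using A.pd_mult[OF fx eval_word_closed[OF w]] False by (simp add: eval_word_Cons)
    finally show ?thesis .
  qed
qed simp

lemma eval_term_pd: "wf_term g r \<Longrightarrow> eval_term A f (term_pd g r) = pd A (eval_term A f r)"
proof (induction r)
  case Nil
  then show ?case by (simp add: A.pd_zero)
next
  case (Cons p r)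
  then show ?case
    by (simp add: eval_term_append eval_term_smult eval_word_pd wf_term_word_pd wf_term_pd
        homogeneous_pd eval_word_closed eval_term_closed A.pd_add A.pd_smult)
qed

lemma eval_word_hom:
  "w \<noteq> [] \<Longrightarrow> set w \<subseteq> homogeneous g \<Longrightarrow> eval_word A f w \<in> hom A (word_degree g w)"
proof (induction w)
  case (Cons x w)
  then have fx: "f x \<in> hom A (degree g x)" using f_hom homogeneous_hom by simp
  then show ?case
    using Cons by (cases "w = []") (simp_all add: eval_word_Cons A.mult_hom)
qed simp

lemma eval_term_component_hom: "wf_term g r \<Longrightarrow> eval_term A f (term_component g n r) \<in> hom A n"
  by (induction r) (auto simp: A.zero_hom A.add_hom A.smult_hom eval_word_hom)

lemma eval_term_sum_components:
  assumes "finite D" "(\<lambda>p. word_degree g (snd p)) ` set r \<subseteq> D"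
  shows "wf_term g r \<Longrightarrow> eval_term A f r = (\<Oplus>\<^bsub>A\<^esub>n\<in>D. eval_term A f (term_component g n r))"
  using assms(2)
proof (induction r)
  case (Cons p r)
  let ?t = "fst p \<odot>\<^bsub>A\<^esub> eval_word A f (snd p)"
  have t: "?t \<in> carrier A" using Cons.prems eval_word_closed by simp
  have comps: "(\<lambda>n. eval_term A f (term_component g n r)) \<in> D \<rightarrow> carrier A"
    using Cons.prems by (auto intro: eval_term_closed wf_term_component)
  have "(\<Oplus>\<^bsub>A\<^esub>n\<in>D. eval_term A f (term_component g n (p # r))) =
      (\<Oplus>\<^bsub>A\<^esub>n\<in>D. (if word_degree g (snd p) = n then ?t else \<zero>\<^bsub>A\<^esub>) \<oplus>\<^bsub>A\<^esub>
        eval_term A f (term_component g n r))"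
    using Cons.prems t by (intro A.finsum_cong') (auto simp: eval_term_closed wf_term_component)
  also have "\<dots> = (\<Oplus>\<^bsub>A\<^esub>n\<in>D. if word_degree g (snd p) = n then ?t else \<zero>\<^bsub>A\<^esub>) \<oplus>\<^bsub>A\<^esub>
      (\<Oplus>\<^bsub>A\<^esub>n\<in>D. eval_term A f (term_component g n r))"
    using comps t by (intro A.finsum_addf) auto
  also have "\<dots> = eval_term A f (p # r)"
    using A.finsum_singleton[of "word_degree g (snd p)" D "\<lambda>_. ?t"] Cons assms(1) t by simp
  finally show ?case by simp
qed simp

lemma comps_eval_term:
  assumes "wf_term g r"
  shows "comps A (eval_term A f r) n = eval_term A f (term_component g n r)"
proof -
  let ?D = "(\<lambda>p. word_degree g (snd p)) ` set r"
  have "comps A (eval_term A f r) = (\<lambda>n. eval_term A f (term_component g n r))"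
  proof (rule comps_eqI[OF A.graded])
    show "finite ?D" by simp
    show "\<And>n. n \<notin> ?D \<Longrightarrow> eval_term A f (term_component g n r) = \<zero>\<^bsub>A\<^esub>"
      by (simp add: term_component_eq_Nil)
    show "\<And>n. eval_term A f (term_component g n r) \<in> hom A n"
      using assms by (rule eval_term_component_hom)
    show "eval_term A f r = (\<Oplus>\<^bsub>A\<^esub>n\<in>?D. eval_term A f (term_component g n r))"
      using assms by (intro eval_term_sum_components) auto
  qed
  then show ?thesis by simp
qed

lemma degs_eval_term:
  "wf_term g r \<Longrightarrow> degs A (eval_term A f r) \<subseteq> (\<lambda>p. word_degree g (snd p)) ` set r"
  using comps_eval_term term_component_eq_Nil by (fastforce simp: degs_def)

lemma eval_term_of: "x \<in> carrier g \<Longrightarrow> eval_term A f (term_of g x) = f x"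
proof -
  assume x: "x \<in> carrier g"
  note c = comps_graded_module[OF graded x]
  have "eval_term A f (term_of g x) = (\<Oplus>\<^bsub>A\<^esub>n\<in>degs g x. f (comps g x n))"
  proof -
    have "distinct ns \<Longrightarrow> eval_term A f (map (\<lambda>n. (1, [comps g x n])) ns) =
        (\<Oplus>\<^bsub>A\<^esub>n\<in>set ns. f (comps g x n))" for ns
      by (induction ns) (auto simp: f_closed homogeneous_closed comps_homogeneous x)
    then show ?thesis unfolding term_of_def using c(1) by simp
  qed
  also have "\<dots> = f x"
    using c(2) hom_closed f_closed f_add f_zero x
    by (subst c(3), intro additive_finsum[symmetric] c(1) abelian_group.axioms(1) abelian_group
        A.abelian_monoid) auto
  finally show ?thesis .
qed

lemma eval_curv_term: "eval_term A f [(1, [curv g])] = curv A"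
  by (simp add: f_curv A.curv_closed)

lemma cmor_eval_term:
  assumes C: "curved_algebra C" and j: "cmor A C j"
    and j_f: "\<And>x. x \<in> homogeneous g \<Longrightarrow> j (f x) = f' x"
  shows "wf_term g r \<Longrightarrow> j (eval_term A f r) = eval_term C f' r"
proof -
  interpret C: curved_algebra C by (rule C)
  have j_zero: "j \<zero>\<^bsub>A\<^esub> = \<zero>\<^bsub>C\<^esub>"
    using A.abelian_group_axioms C.abelian_group_axioms j by (rule cmor_zero)
  have word: "set w \<subseteq> homogeneous g \<Longrightarrow> j (eval_word A f w) = eval_word C f' w" for w
  proof (induction w)
    case (Cons x w)
    then show ?case
      by (cases "w = []") (simp_all add: eval_word_Cons j_f cmor_mult[OF j] f_closed
          homogeneous_closed eval_word_closed)
  qed (simp add: j_zero)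
  show "wf_term g r \<Longrightarrow> j (eval_term A f r) = eval_term C f' r"
    by (induction r) (simp_all add: j_zero cmor_add[OF j] cmor_smult[OF j] word eval_word_closed
        eval_term_closed)
qed

end

definition models :: "('k::field_char_0, 'a) cstruct \<Rightarrow>
    (('k, ('k, 'a) uea_carrier) cstruct \<times> ('a \<Rightarrow> ('k, 'a) uea_carrier)) set" where
  "models g = {i. curved_assoc (fst i) \<and> cmor g (Skew (fst i)) (snd i)}"

definition term_equiv ::
  "('k::field_char_0, 'a) cstruct \<Rightarrow> ('k, 'a) uea_carrier \<Rightarrow> ('k, 'a) uea_carrier \<Rightarrow> bool" where
  "term_equiv g r s \<longleftrightarrow> (\<forall>i\<in>models g. eval_term (fst i) (snd i) r = eval_term (fst i) (snd i) s)"

definition canon_term ::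
  "('k::field_char_0, 'a) cstruct \<Rightarrow> ('k, 'a) uea_carrier \<Rightarrow> ('k, 'a) uea_carrier" where
  "canon_term g r = (SOME s. wf_term g s \<and> term_equiv g s r)"

definition UEA_carrier :: "('k::field_char_0, 'a) cstruct \<Rightarrow> ('k, 'a) uea_carrier set" where
  "UEA_carrier g = canon_term g ` {r. wf_term g r}"

text \<open>Terms modulo equality under evaluation in all models, each class represented by a chosen
  term; the grading is likewise read off from the models.\<close>
definition term_UEA :: "('k::field_char_0, 'a) cstruct \<Rightarrow> ('k, ('k, 'a) uea_carrier) cstruct" where
  "term_UEA g =
    \<lparr>carrier = UEA_carrier g, mult = \<lambda>u v. canon_term g (term_mult u v),
     one = canon_term g [], zero = canon_term g [], add = \<lambda>u v. canon_term g (u @ v),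
     smult = \<lambda>c u. canon_term g (term_smult c u),
     hom = \<lambda>n. {u \<in> UEA_carrier g. \<forall>i\<in>models g. eval_term (fst i) (snd i) u \<in> hom (fst i) n},
     pd = \<lambda>u. canon_term g (term_pd g u), curv = canon_term g [(1, [curv g])]\<rparr>"

definition term_UEA_unit :: "('k::field_char_0, 'a) cstruct \<Rightarrow> 'a \<Rightarrow> ('k, 'a) uea_carrier" where
  "term_UEA_unit g x = canon_term g (term_of g x)"

lemma term_UEA_simps [simp]:
  "carrier (term_UEA g) = UEA_carrier g"
  "u \<otimes>\<^bsub>term_UEA g\<^esub> v = canon_term g (term_mult u v)"
  "\<zero>\<^bsub>term_UEA g\<^esub> = canon_term g []"
  "u \<oplus>\<^bsub>term_UEA g\<^esub> v = canon_term g (u @ v)"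
  "c \<odot>\<^bsub>term_UEA g\<^esub> u = canon_term g (term_smult c u)"
  "hom (term_UEA g) n =
    {u \<in> UEA_carrier g. \<forall>i\<in>models g. eval_term (fst i) (snd i) u \<in> hom (fst i) n}"
  "pd (term_UEA g) u = canon_term g (term_pd g u)"
  "curv (term_UEA g) = canon_term g [(1, [curv g])]"
  by (simp_all add: term_UEA_def)

context curved_lie_algebra
begin

lemma models_lie_map_to_skew: "i \<in> models g \<Longrightarrow> lie_map_to_skew g (fst i) (snd i)"
  using curved_lie_algebra_axioms
  by (intro lie_map_to_skew.intro lie_map_to_skew_axioms.intro curved_algebra.intro)
    (simp_all add: models_def)

lemma canon_term_equiv: "wf_term g r \<Longrightarrow> wf_term g (canon_term g r) \<and> term_equiv g (canon_term g r) r"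
  unfolding canon_term_def by (rule someI[of _ r]) (simp add: term_equiv_def)

lemma eval_canon_term_models:
  "wf_term g r \<Longrightarrow> i \<in> models g \<Longrightarrow>
    eval_term (fst i) (snd i) (canon_term g r) = eval_term (fst i) (snd i) r"
  using canon_term_equiv unfolding term_equiv_def by blast

lemma canon_term_eqI:
  assumes "term_equiv g r s"
  shows "canon_term g r = canon_term g s"
proof -
  have "term_equiv g t r \<longleftrightarrow> term_equiv g t s" for t
    using assms by (auto simp: term_equiv_def)
  then show ?thesis by (simp add: canon_term_def)
qed

lemma UEA_carrier_wf: "u \<in> UEA_carrier g \<Longrightarrow> wf_term g u"
  unfolding UEA_carrier_def using canon_term_equiv by blast

lemma canon_term_in_UEA_carrier: "wf_term g r \<Longrightarrow> canon_term g r \<in> UEA_carrier g"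
  unfolding UEA_carrier_def by blast

lemma canon_term_UEA_carrier: "u \<in> UEA_carrier g \<Longrightarrow> canon_term g u = u"
  unfolding UEA_carrier_def using canon_term_equiv canon_term_eqI by auto

lemma term_UEA_closed:
  assumes "u \<in> UEA_carrier g" "v \<in> UEA_carrier g"
  shows "canon_term g (u @ v) \<in> UEA_carrier g" "canon_term g (term_mult u v) \<in> UEA_carrier g"
    "canon_term g (term_smult c u) \<in> UEA_carrier g" "canon_term g (term_pd g u) \<in> UEA_carrier g"
  using assms by (simp_all add: canon_term_in_UEA_carrier UEA_carrier_wf wf_term_mult wf_term_pd)

lemma jointly_embedded_term_UEA:
  "jointly_embedded (term_UEA g) (models g) fst (\<lambda>i. eval_term (fst i) (snd i))"
proof
  fix i assume i: "i \<in> models g"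
  interpret lie_map_to_skew g "fst i" "snd i" using models_lie_map_to_skew[OF i] .
  show "curved_assoc (fst i)" using i by (simp add: models_def)
  show "\<And>u. u \<in> carrier (term_UEA g) \<Longrightarrow> eval_term (fst i) (snd i) u \<in> carrier (fst i)"
    using eval_term_closed UEA_carrier_wf by simp
  show "eval_term (fst i) (snd i) \<zero>\<^bsub>term_UEA g\<^esub> = \<zero>\<^bsub>fst i\<^esub>"
    using eval_canon_term_models[OF _ i] by simp
  show "eval_term (fst i) (snd i) (curv (term_UEA g)) = curv (fst i)"
    using eval_canon_term_models[OF wf_curv_term i] eval_curv_term by simp
  fix u v c assume u: "u \<in> carrier (term_UEA g)" and v: "v \<in> carrier (term_UEA g)"
  then have "wf_term g u" "wf_term g v" by (simp_all add: UEA_carrier_wf)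
  then show "eval_term (fst i) (snd i) (u \<oplus>\<^bsub>term_UEA g\<^esub> v) =
      eval_term (fst i) (snd i) u \<oplus>\<^bsub>fst i\<^esub> eval_term (fst i) (snd i) v"
    and "eval_term (fst i) (snd i) (u \<otimes>\<^bsub>term_UEA g\<^esub> v) =
      eval_term (fst i) (snd i) u \<otimes>\<^bsub>fst i\<^esub> eval_term (fst i) (snd i) v"
    and "eval_term (fst i) (snd i) (pd (term_UEA g) u) = pd (fst i) (eval_term (fst i) (snd i) u)"
    and "eval_term (fst i) (snd i) (c \<odot>\<^bsub>term_UEA g\<^esub> u) = c \<odot>\<^bsub>fst i\<^esub> eval_term (fst i) (snd i) u"
    using eval_canon_term_models[OF _ i]
    by (simp_all add: eval_term_append eval_term_mult eval_term_pd eval_term_smult wf_term_mult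
        wf_term_pd)
next
  fix u v assume "u \<in> carrier (term_UEA g)" "v \<in> carrier (term_UEA g)"
    "\<And>i. i \<in> models g \<Longrightarrow> eval_term (fst i) (snd i) u = eval_term (fst i) (snd i) v"
  then show "u = v"
    using canon_term_eqI[of u v] canon_term_UEA_carrier by (simp add: term_equiv_def)
next
  fix u n assume "u \<in> carrier (term_UEA g)"
  then have wf: "wf_term g u" by (simp add: UEA_carrier_wf)
  show "\<exists>w\<in>carrier (term_UEA g). \<forall>i\<in>models g.
      eval_term (fst i) (snd i) w = comps (fst i) (eval_term (fst i) (snd i) u) n"
    using wf eval_canon_term_models lie_map_to_skew.comps_eval_term[OF models_lie_map_to_skew]
    by (intro bexI[of _ "canon_term g (term_component g n u)"])
      (simp_all add: wf_term_component canon_term_in_UEA_carrier)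
  show "\<exists>D. finite D \<and> (\<forall>i\<in>models g. degs (fst i) (eval_term (fst i) (snd i) u) \<subseteq> D)"
    using wf lie_map_to_skew.degs_eval_term[OF models_lie_map_to_skew]
    by (intro exI[of _ "(\<lambda>p. word_degree g (snd p)) ` set u"]) simp
qed (auto intro: canon_term_in_UEA_carrier wf_curv_term term_UEA_closed)

lemma curved_assoc_term_UEA: "curved_assoc (term_UEA g)"
  using jointly_embedded_term_UEA by (rule jointly_embedded.curved_assoc)

lemma eval_term_UEA_unit_models:
  "i \<in> models g \<Longrightarrow> x \<in> carrier g \<Longrightarrow> eval_term (fst i) (snd i) (term_UEA_unit g x) = snd i x"
  unfolding term_UEA_unit_def
  using eval_canon_term_models wf_term_of lie_map_to_skew.eval_term_of[OF models_lie_map_to_skew]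
  by simp

lemma term_UEA_unit_closed: "x \<in> carrier g \<Longrightarrow> term_UEA_unit g x \<in> UEA_carrier g"
  unfolding term_UEA_unit_def by (simp add: canon_term_in_UEA_carrier wf_term_of)

lemma cmor_term_UEA_unit: "cmor g (Skew (term_UEA g)) (term_UEA_unit g)"
  using jointly_embedded_term_UEA curved_lie_algebra_axioms
proof (rule jointly_embedded.cmor_SkewI)
  show "\<And>x. x \<in> carrier g \<Longrightarrow> term_UEA_unit g x \<in> carrier (term_UEA g)"
    by (simp add: term_UEA_unit_closed)
  show "\<And>i. i \<in> models g \<Longrightarrow> cmor g (Skew (fst i)) (snd i)"
    unfolding models_def by simp
qed (rule eval_term_UEA_unit_models)

end

definition generated ::
  "('k::field_char_0, 'a) cstruct \<Rightarrow> ('k, 'c) cstruct \<Rightarrow> ('a \<Rightarrow> 'c) \<Rightarrow> 'c set" where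
  "generated g A f = eval_term A f ` {r. wf_term g r}"

definition term_repr ::
  "('k::field_char_0, 'a) cstruct \<Rightarrow> ('k, 'c) cstruct \<Rightarrow> ('a \<Rightarrow> 'c) \<Rightarrow> 'c \<Rightarrow> ('k, 'a) uea_carrier" where
  "term_repr g A f a = (SOME r. wf_term g r \<and> eval_term A f r = a)"

text \<open>The subalgebra of A generated by the image of f, transported into the term type along
  chosen representing terms.\<close>
definition generated_copy ::
  "('k::field_char_0, 'a) cstruct \<Rightarrow> ('k, 'c) cstruct \<Rightarrow> ('a \<Rightarrow> 'c) \<Rightarrow>
    ('k, ('k, 'a) uea_carrier) cstruct" where
  "generated_copy g A f =
    \<lparr>carrier = term_repr g A f ` generated g A f,
     mult = \<lambda>u v. term_repr g A f (eval_term A f u \<otimes>\<^bsub>A\<^esub> eval_term A f v),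
     one = term_repr g A f \<zero>\<^bsub>A\<^esub>, zero = term_repr g A f \<zero>\<^bsub>A\<^esub>,
     add = \<lambda>u v. term_repr g A f (eval_term A f u \<oplus>\<^bsub>A\<^esub> eval_term A f v),
     smult = \<lambda>c u. term_repr g A f (c \<odot>\<^bsub>A\<^esub> eval_term A f u),
     hom = \<lambda>n. {u \<in> term_repr g A f ` generated g A f. eval_term A f u \<in> hom A n},
     pd = \<lambda>u. term_repr g A f (pd A (eval_term A f u)), curv = term_repr g A f (curv A)\<rparr>"

definition generated_copy_map ::
  "('k::field_char_0, 'a) cstruct \<Rightarrow> ('k, 'c) cstruct \<Rightarrow> ('a \<Rightarrow> 'c) \<Rightarrow> 'a \<Rightarrow> ('k, 'a) uea_carrier" where
  "generated_copy_map g A f x = term_repr g A f (f x)"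

lemma generated_copy_simps [simp]:
  "carrier (generated_copy g A f) = term_repr g A f ` generated g A f"
  "u \<otimes>\<^bsub>generated_copy g A f\<^esub> v = term_repr g A f (eval_term A f u \<otimes>\<^bsub>A\<^esub> eval_term A f v)"
  "\<zero>\<^bsub>generated_copy g A f\<^esub> = term_repr g A f \<zero>\<^bsub>A\<^esub>"
  "u \<oplus>\<^bsub>generated_copy g A f\<^esub> v = term_repr g A f (eval_term A f u \<oplus>\<^bsub>A\<^esub> eval_term A f v)"
  "c \<odot>\<^bsub>generated_copy g A f\<^esub> u = term_repr g A f (c \<odot>\<^bsub>A\<^esub> eval_term A f u)"
  "hom (generated_copy g A f) n =
    {u \<in> term_repr g A f ` generated g A f. eval_term A f u \<in> hom A n}"
  "pd (generated_copy g A f) u = term_repr g A f (pd A (eval_term A f u))"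
  "curv (generated_copy g A f) = term_repr g A f (curv A)"
  by (simp_all add: generated_copy_def)

context lie_map_to_skew
begin

lemma term_repr:
  "a \<in> generated g A f \<Longrightarrow> wf_term g (term_repr g A f a) \<and> eval_term A f (term_repr g A f a) = a"
  unfolding generated_def term_repr_def by (rule someI_ex) blast

lemma eval_term_in_generated: "wf_term g r \<Longrightarrow> eval_term A f r \<in> generated g A f"
  unfolding generated_def by blast

lemma generated_copy_carrier:
  assumes "u \<in> carrier (generated_copy g A f)"
  shows "wf_term g u" "eval_term A f u \<in> generated g A f" "term_repr g A f (eval_term A f u) = u"
  using assms term_repr by auto

lemma generated_closed:
  assumes "a \<in> generated g A f" "b \<in> generated g A f"
  shows "a \<oplus>\<^bsub>A\<^esub> b \<in> generated g A f" "a \<otimes>\<^bsub>A\<^esub> b \<in> generated g A f"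
    "c \<odot>\<^bsub>A\<^esub> a \<in> generated g A f" "pd A a \<in> generated g A f" "comps A a n \<in> generated g A f"
proof -
  obtain r s where "wf_term g r" "a = eval_term A f r" "wf_term g s" "b = eval_term A f s"
    using assms unfolding generated_def by blast
  then show "a \<oplus>\<^bsub>A\<^esub> b \<in> generated g A f" "a \<otimes>\<^bsub>A\<^esub> b \<in> generated g A f"
    "c \<odot>\<^bsub>A\<^esub> a \<in> generated g A f" "pd A a \<in> generated g A f" "comps A a n \<in> generated g A f"
    using eval_term_in_generated[of "r @ s"] eval_term_in_generated[of "term_mult r s"]
      eval_term_in_generated[of "term_smult c r"] eval_term_in_generated[of "term_pd g r"]
      eval_term_in_generated[of "term_component g n r"]
    by (simp_all add: eval_term_append eval_term_mult eval_term_smult eval_term_pd wf_term_mult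
        wf_term_pd comps_eval_term wf_term_component)
qed

lemma jointly_embedded_generated_copy:
  "jointly_embedded (generated_copy g A f) (UNIV :: unit set) (\<lambda>_. A) (\<lambda>_. eval_term A f)"
proof
  have zero: "\<zero>\<^bsub>A\<^esub> \<in> generated g A f" using eval_term_in_generated[of "[]"] by simp
  have curv: "curv A \<in> generated g A f"
    using eval_term_in_generated[OF wf_curv_term] eval_curv_term by simp
  show "\<zero>\<^bsub>generated_copy g A f\<^esub> \<in> carrier (generated_copy g A f)"
    and "\<And>i. eval_term A f \<zero>\<^bsub>generated_copy g A f\<^esub> = \<zero>\<^bsub>A\<^esub>"
    and "curv (generated_copy g A f) \<in> carrier (generated_copy g A f)"
    and "\<And>i. eval_term A f (curv (generated_copy g A f)) = curv A"
    using zero curv term_repr by simp_all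
  fix u v c n
  assume u: "u \<in> carrier (generated_copy g A f)" and v: "v \<in> carrier (generated_copy g A f)"
  note wf = generated_copy_carrier(1)[OF u] generated_copy_carrier(1)[OF v]
  show "\<And>i. eval_term A f u \<in> carrier A" using wf(1) by (rule eval_term_closed)
  note closed = generated_closed[OF generated_copy_carrier(2)[OF u] generated_copy_carrier(2)[OF v]]
  show "u \<oplus>\<^bsub>generated_copy g A f\<^esub> v \<in> carrier (generated_copy g A f)"
    and "u \<otimes>\<^bsub>generated_copy g A f\<^esub> v \<in> carrier (generated_copy g A f)"
    and "c \<odot>\<^bsub>generated_copy g A f\<^esub> u \<in> carrier (generated_copy g A f)"
    and "pd (generated_copy g A f) u \<in> carrier (generated_copy g A f)"
    and "\<And>i. eval_term A f (u \<oplus>\<^bsub>generated_copy g A f\<^esub> v) = eval_term A f u \<oplus>\<^bsub>A\<^esub> eval_term A f v"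
    and "\<And>i. eval_term A f (u \<otimes>\<^bsub>generated_copy g A f\<^esub> v) = eval_term A f u \<otimes>\<^bsub>A\<^esub> eval_term A f v"
    and "\<And>i. eval_term A f (c \<odot>\<^bsub>generated_copy g A f\<^esub> u) = c \<odot>\<^bsub>A\<^esub> eval_term A f u"
    and "\<And>i. eval_term A f (pd (generated_copy g A f) u) = pd A (eval_term A f u)"
    using closed term_repr by simp_all
  show "\<exists>w\<in>carrier (generated_copy g A f). \<forall>i\<in>UNIV. eval_term A f w = comps A (eval_term A f u) n"
    using closed(5) term_repr by auto
  show "\<exists>D. finite D \<and> (\<forall>i\<in>UNIV. degs A (eval_term A f u) \<subseteq> D)"
    using comps_graded_module(1)[OF A.graded eval_term_closed[OF wf(1)]] by blast
next
  fix u v assume u: "u \<in> carrier (generated_copy g A f)" and v: "v \<in> carrier (generated_copy g A f)"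
    and eq: "\<And>i. i \<in> (UNIV :: unit set) \<Longrightarrow> eval_term A f u = eval_term A f v"
  have "u = term_repr g A f (eval_term A f u)" using generated_copy_carrier(3)[OF u] by simp
  also have "\<dots> = v" using eq generated_copy_carrier(3)[OF v] by simp
  finally show "u = v" .
qed simp

lemma generated_copy_models: "(generated_copy g A f, generated_copy_map g A f) \<in> models g"
proof -
  have "cmor g (Skew (generated_copy g A f)) (generated_copy_map g A f)"
    using jointly_embedded_generated_copy curved_lie_algebra_axioms
  proof (rule jointly_embedded.cmor_SkewI)
    fix x assume x: "x \<in> carrier g"
    then have "f x \<in> generated g A f"
      using eval_term_in_generated[OF wf_term_of[OF x]] eval_term_of[OF x] by simp
    then show "generated_copy_map g A f x \<in> carrier (generated_copy g A f)"
      and "eval_term A f (generated_copy_map g A f x) = f x"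
      using term_repr by (simp_all add: generated_copy_map_def)
  qed (rule f_cmor)
  then show ?thesis
    using jointly_embedded.curved_assoc[OF jointly_embedded_generated_copy]
    by (simp add: models_def)
qed

lemma eval_term_generated_copy:
  assumes "wf_term g r"
  shows "eval_term A f (eval_term (generated_copy g A f) (generated_copy_map g A f) r) =
    eval_term A f r"
proof -
  interpret copy: lie_map_to_skew g "generated_copy g A f" "generated_copy_map g A f"
    using models_lie_map_to_skew[OF generated_copy_models] by simp
  show ?thesis
  proof (rule copy.cmor_eval_term[OF A.curved_algebra_axioms _ _ assms])
    show "cmor (generated_copy g A f) A (eval_term A f)"
      using jointly_embedded.cmor_E[OF jointly_embedded_generated_copy] by simp
    fix x assume "x \<in> homogeneous g"
    then have x: "x \<in> carrier g" by (rule homogeneous_closed)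
    then have "f x \<in> generated g A f"
      using eval_term_in_generated[OF wf_term_of[OF x]] eval_term_of[OF x] by simp
    then show "eval_term A f (generated_copy_map g A f x) = f x"
      using term_repr by (simp add: generated_copy_map_def)
  qed
qed

lemma eval_term_respects_equiv:
  assumes "wf_term g r" "wf_term g s" "term_equiv g r s"
  shows "eval_term A f r = eval_term A f s"
proof -
  have "eval_term (generated_copy g A f) (generated_copy_map g A f) r =
      eval_term (generated_copy g A f) (generated_copy_map g A f) s"
    using bspec[OF assms(3)[unfolded term_equiv_def] generated_copy_models] by simp
  then show ?thesis
    using eval_term_generated_copy[OF assms(1)] eval_term_generated_copy[OF assms(2)] by simp
qed

lemma eval_canon_term: "wf_term g r \<Longrightarrow> eval_term A f (canon_term g r) = eval_term A f r"
  using canon_term_equiv by (auto intro: eval_term_respects_equiv)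

lemma cmor_eval_term_UEA: "cmor (term_UEA g) A (eval_term A f)"
  unfolding cmor_def
proof (intro conjI ballI allI)
  fix u v c n assume u: "u \<in> carrier (term_UEA g)" and v: "v \<in> carrier (term_UEA g)"
  then have wf: "wf_term g u" "wf_term g v" by (simp_all add: UEA_carrier_wf)
  then show "eval_term A f u \<in> carrier A"
    and "eval_term A f (u \<oplus>\<^bsub>term_UEA g\<^esub> v) = eval_term A f u \<oplus>\<^bsub>A\<^esub> eval_term A f v"
    and "eval_term A f (u \<otimes>\<^bsub>term_UEA g\<^esub> v) = eval_term A f u \<otimes>\<^bsub>A\<^esub> eval_term A f v"
    and "eval_term A f (c \<odot>\<^bsub>term_UEA g\<^esub> u) = c \<odot>\<^bsub>A\<^esub> eval_term A f u"
    and "eval_term A f (pd (term_UEA g) u) = pd A (eval_term A f u)"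
    by (simp_all add: eval_term_closed eval_canon_term eval_term_append eval_term_mult
        eval_term_smult eval_term_pd wf_term_mult wf_term_pd)
next
  fix n u assume "u \<in> hom (term_UEA g) n"
  then have "eval_term (generated_copy g A f) (generated_copy_map g A f) u \<in>
      hom (generated_copy g A f) n"
    and wf: "wf_term g u"
    using generated_copy_models by (auto simp: UEA_carrier_wf)
  then show "eval_term A f u \<in> hom A n"
    using eval_term_generated_copy[OF wf] by simp
next
  show "eval_term A f (curv (term_UEA g)) = curv A"
    using eval_canon_term[OF wf_curv_term] eval_curv_term by simp
qed

lemma eval_term_UEA_unit: "x \<in> carrier g \<Longrightarrow> eval_term A f (term_UEA_unit g x) = f x"
  unfolding term_UEA_unit_def by (simp add: eval_canon_term wf_term_of eval_term_of)

end

context curved_lie_algebra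
begin

lemma canon_term_letter: "x \<in> homogeneous g \<Longrightarrow> canon_term g [(1, [x])] = term_UEA_unit g x"
  unfolding term_UEA_unit_def
proof (rule canon_term_eqI)
  assume x: "x \<in> homogeneous g"
  show "term_equiv g [(1, [x])] (term_of g x)"
    unfolding term_equiv_def
  proof
    fix i assume i: "i \<in> models g"
    interpret lie_map_to_skew g "fst i" "snd i" using models_lie_map_to_skew[OF i] .
    show "eval_term (fst i) (snd i) [(1, [x])] = eval_term (fst i) (snd i) (term_of g x)"
      using x by (simp add: eval_term_of homogeneous_closed f_closed)
  qed
qed

lemma canon_term_word_Cons:
  assumes "x \<in> homogeneous g" "w \<noteq> []" "set w \<subseteq> homogeneous g"
  shows "canon_term g [(1, x # w)] = term_UEA_unit g x \<otimes>\<^bsub>term_UEA g\<^esub> canon_term g [(1, w)]"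
  unfolding term_UEA_simps
proof (rule canon_term_eqI)
  show "term_equiv g [(1, x # w)] (term_mult (term_UEA_unit g x) (canon_term g [(1, w)]))"
    unfolding term_equiv_def
  proof
    fix i assume i: "i \<in> models g"
    interpret lie_map_to_skew g "fst i" "snd i" using models_lie_map_to_skew[OF i] .
    show "eval_term (fst i) (snd i) [(1, x # w)] =
        eval_term (fst i) (snd i) (term_mult (term_UEA_unit g x) (canon_term g [(1, w)]))"
      using assms eval_canon_term_models[OF _ i] eval_term_UEA_unit_models[OF i]
      by (simp add: eval_term_mult wf_term_mult canon_term_equiv term_UEA_unit_def wf_term_of
          homogeneous_closed eval_word_Cons eval_word_closed f_closed A.mult_closed)
  qed
qed

lemma canon_term_Cons:
  assumes "snd p \<noteq> []" "set (snd p) \<subseteq> homogeneous g" "wf_term g r"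
  shows "canon_term g (p # r) =
    fst p \<odot>\<^bsub>term_UEA g\<^esub> canon_term g [(1, snd p)] \<oplus>\<^bsub>term_UEA g\<^esub> canon_term g r"
  unfolding term_UEA_simps
proof (rule canon_term_eqI)
  show "term_equiv g (p # r)
      (canon_term g (term_smult (fst p) (canon_term g [(1, snd p)])) @ canon_term g r)"
    unfolding term_equiv_def
  proof
    fix i assume i: "i \<in> models g"
    interpret lie_map_to_skew g "fst i" "snd i" using models_lie_map_to_skew[OF i] .
    show "eval_term (fst i) (snd i) (p # r) = eval_term (fst i) (snd i)
        (canon_term g (term_smult (fst p) (canon_term g [(1, snd p)])) @ canon_term g r)"
      using assms eval_canon_term_models[OF _ i] canon_term_equiv
      by (simp add: eval_term_append eval_term_smult eval_word_closed)
  qed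
qed

lemma cmor_term_UEA_canon_word:
  assumes k: "cmor (term_UEA g) C k" and k_unit: "\<And>x. x \<in> carrier g \<Longrightarrow> k (term_UEA_unit g x) = h x"
  shows "w \<noteq> [] \<Longrightarrow> set w \<subseteq> homogeneous g \<Longrightarrow> k (canon_term g [(1, w)]) = eval_word C h w"
proof (induction w)
  case (Cons x w)
  then have x: "x \<in> carrier g" by (simp add: homogeneous_closed)
  show ?case
  proof (cases "w = []")
    case True
    then show ?thesis using Cons.prems x by (simp add: canon_term_letter k_unit)
  next
    case False
    then show ?thesis
      using Cons x
      by (simp add: canon_term_word_Cons cmor_mult[OF k, simplified] k_unit eval_word_Cons
          term_UEA_unit_closed canon_term_in_UEA_carrier)
  qed
qed simp

lemma cmor_term_UEA_canon_term:
  assumes C: "curved_algebra C" and k: "cmor (term_UEA g) C k"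
    and k_unit: "\<And>x. x \<in> carrier g \<Longrightarrow> k (term_UEA_unit g x) = h x"
  shows "wf_term g r \<Longrightarrow> k (canon_term g r) = eval_term C h r"
proof (induction r)
  case Nil
  interpret C: curved_algebra C by (rule C)
  have "abelian_group (term_UEA g)"
    using jointly_embedded_term_UEA by (rule jointly_embedded.abelian_group)
  from cmor_zero[OF this C.abelian_group_axioms k] show ?case by simp
next
  case (Cons p r)
  then have "canon_term g (p # r) =
      fst p \<odot>\<^bsub>term_UEA g\<^esub> canon_term g [(1, snd p)] \<oplus>\<^bsub>term_UEA g\<^esub> canon_term g r"
    by (intro canon_term_Cons) simp_all
  then show ?case
    using Cons
    by (simp add: cmor_add[OF k, simplified] cmor_smult[OF k, simplified] canon_term_in_UEA_carrier
        UEA_carrier_wf cmor_term_UEA_canon_word[OF k k_unit])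
qed

lemma term_UEA_cmor_unique:
  assumes "curved_algebra C" "cmor (term_UEA g) C k"
    and "\<And>x. x \<in> carrier g \<Longrightarrow> k (term_UEA_unit g x) = h x"
    and u: "u \<in> UEA_carrier g"
  shows "k u = eval_term C h u"
  using cmor_term_UEA_canon_term[OF assms(1-3) UEA_carrier_wf[OF u]] canon_term_UEA_carrier[OF u]
  by simp

lemma term_UEA_universal: "universal_arrow g (term_UEA g) (term_UEA_unit g) TYPE('b)"
  unfolding universal_arrow_def
proof (intro conjI allI impI)
  show "curved_assoc (term_UEA g)" by (rule curved_assoc_term_UEA)
  show "cmor g (Skew (term_UEA g)) (term_UEA_unit g)" by (rule cmor_term_UEA_unit)
  fix A :: "('k, 'b) cstruct" and f
  assume "curved_assoc A \<and> cmor g (Skew A) f"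
  then interpret lie_map_to_skew g A f
    by (intro lie_map_to_skew.intro lie_map_to_skew_axioms.intro curved_algebra.intro
        curved_lie_algebra_axioms) simp_all
  show "\<exists>h. cmor (term_UEA g) A h \<and> (\<forall>x\<in>carrier g. h (term_UEA_unit g x) = f x) \<and>
      (\<forall>h'. cmor (term_UEA g) A h' \<and> (\<forall>x\<in>carrier g. h' (term_UEA_unit g x) = f x) \<longrightarrow>
        (\<forall>u\<in>carrier (term_UEA g). h' u = h u))"
  proof (intro exI[of _ "eval_term A f"] conjI allI impI ballI)
    show "cmor (term_UEA g) A (eval_term A f)" by (rule cmor_eval_term_UEA)
    show "\<And>x. x \<in> carrier g \<Longrightarrow> eval_term A f (term_UEA_unit g x) = f x"
      by (rule eval_term_UEA_unit)
    fix h' u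
    assume "cmor (term_UEA g) A h' \<and> (\<forall>x\<in>carrier g. h' (term_UEA_unit g x) = f x)"
      and "u \<in> carrier (term_UEA g)"
    then show "h' u = eval_term A f u"
      using term_UEA_cmor_unique[OF A.curved_algebra_axioms, of h' f u] by simp
  qed
qed

end

lemma universal_arrow_exists:
  assumes "universal_arrow g U \<eta> TYPE('b)" "curved_assoc (A :: ('k::field_char_0, 'b) cstruct)"
    "cmor g (Skew A) f"
  shows "\<exists>h. cmor U A h \<and> (\<forall>x\<in>carrier g. h (\<eta> x) = f x)"
  using assms unfolding universal_arrow_def by blast

lemma universal_arrow_unique:
  assumes "universal_arrow g U \<eta> TYPE('b)" "curved_assoc (A :: ('k::field_char_0, 'b) cstruct)"
    "cmor g (Skew A) f"
    and "cmor U A h\<^sub>1" "\<forall>x\<in>carrier g. h\<^sub>1 (\<eta> x) = f x"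
    and "cmor U A h\<^sub>2" "\<forall>x\<in>carrier g. h\<^sub>2 (\<eta> x) = f x"
    and "y \<in> carrier U"
  shows "h\<^sub>1 y = h\<^sub>2 y"
proof -
  obtain h where "\<forall>h'. cmor U A h' \<and> (\<forall>x\<in>carrier g. h' (\<eta> x) = f x) \<longrightarrow> (\<forall>y\<in>carrier U. h' y = h y)"
    using assms(1-3) unfolding universal_arrow_def by blast
  then have "h\<^sub>1 y = h y" "h\<^sub>2 y = h y" using assms(4-8) by blast+
  then show ?thesis by simp
qed

lemma universal_arrow_transfer:
  fixes U\<^sub>0 U\<^sub>1 :: "('k::field_char_0, 't) cstruct"
  assumes U\<^sub>0: "universal_arrow g U\<^sub>0 \<eta>\<^sub>0 TYPE('t)" "universal_arrow g U\<^sub>0 \<eta>\<^sub>0 TYPE('b)"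
    and U\<^sub>1: "universal_arrow g U\<^sub>1 \<eta>\<^sub>1 TYPE('t)"
  shows "universal_arrow g U\<^sub>1 \<eta>\<^sub>1 TYPE('b)"
proof -
  have U\<^sub>0_alg: "curved_assoc U\<^sub>0" "cmor g (Skew U\<^sub>0) \<eta>\<^sub>0"
    and U\<^sub>1_alg: "curved_assoc U\<^sub>1" "cmor g (Skew U\<^sub>1) \<eta>\<^sub>1"
    using U\<^sub>0(1) U\<^sub>1 unfolding universal_arrow_def by simp_all
  obtain \<phi> where \<phi>: "cmor U\<^sub>1 U\<^sub>0 \<phi>" "\<forall>x\<in>carrier g. \<phi> (\<eta>\<^sub>1 x) = \<eta>\<^sub>0 x"
    using universal_arrow_exists[OF U\<^sub>1 U\<^sub>0_alg] by blast
  obtain \<psi> where \<psi>: "cmor U\<^sub>0 U\<^sub>1 \<psi>" "\<forall>x\<in>carrier g. \<psi> (\<eta>\<^sub>0 x) = \<eta>\<^sub>1 x"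
    using universal_arrow_exists[OF U\<^sub>0(1) U\<^sub>1_alg] by blast
  have \<psi>\<phi>: "\<psi> (\<phi> y) = y" if "y \<in> carrier U\<^sub>1" for y
    using universal_arrow_unique[OF U\<^sub>1 U\<^sub>1_alg cmor_comp[OF \<phi>(1) \<psi>(1)] _ cmor_id _ that]
      \<phi>(2) \<psi>(2) by simp
  have \<phi>_closed: "\<phi> y \<in> carrier U\<^sub>0" if "y \<in> carrier U\<^sub>1" for y
    using \<phi>(1) that by (rule cmor_closed)
  show ?thesis
    unfolding universal_arrow_def
  proof (intro conjI allI impI U\<^sub>1_alg)
    fix A :: "('k, 'b) cstruct" and f
    assume "curved_assoc A \<and> cmor g (Skew A) f"
    then have A: "curved_assoc A" "cmor g (Skew A) f" by simp_all
    then obtain h where h: "cmor U\<^sub>0 A h" "\<forall>x\<in>carrier g. h (\<eta>\<^sub>0 x) = f x"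
      using universal_arrow_exists[OF U\<^sub>0(2)] by blast
    have unique: "h' y = h (\<phi> y)"
      if "cmor U\<^sub>1 A h'" "\<forall>x\<in>carrier g. h' (\<eta>\<^sub>1 x) = f x" "y \<in> carrier U\<^sub>1" for h' y
      using universal_arrow_unique[OF U\<^sub>0(2) A cmor_comp[OF \<psi>(1) that(1)] _ h \<phi>_closed[OF that(3)]]
        that(2) \<psi>(2) \<psi>\<phi>[OF that(3)] by simp
    show "\<exists>h'. cmor U\<^sub>1 A h' \<and> (\<forall>x\<in>carrier g. h' (\<eta>\<^sub>1 x) = f x) \<and>
        (\<forall>h''. cmor U\<^sub>1 A h'' \<and> (\<forall>x\<in>carrier g. h'' (\<eta>\<^sub>1 x) = f x) \<longrightarrow> (\<forall>y\<in>carrier U\<^sub>1. h'' y = h' y))"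
    proof (intro exI[of _ "\<lambda>y. h (\<phi> y)"] conjI allI impI ballI)
      show "cmor U\<^sub>1 A (\<lambda>y. h (\<phi> y))" by (rule cmor_comp[OF \<phi>(1) h(1)])
      show "\<And>x. x \<in> carrier g \<Longrightarrow> h (\<phi> (\<eta>\<^sub>1 x)) = f x" using \<phi>(2) h(2) by simp
      fix h' y assume "cmor U\<^sub>1 A h' \<and> (\<forall>x\<in>carrier g. h' (\<eta>\<^sub>1 x) = f x)" "y \<in> carrier U\<^sub>1"
      then show "h' y = h (\<phi> y)" using unique by blast
    qed
  qed
qed

theorem corollary3p12:
  fixes g :: "('k::field_char_0, 'a) cstruct"
  assumes "curved_lie g"
  shows "universal_arrow g (fst (cUEA g)) (snd (cUEA g)) TYPE('b)"
proof -
  interpret curved_lie_algebra g by (rule curved_lie_algebra.intro[OF assms])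
  have "universal_arrow g (fst (cUEA g)) (snd (cUEA g)) TYPE(('k, 'a) uea_carrier)"
    using someI[of "\<lambda>(U, \<eta>). universal_arrow g U \<eta> TYPE(('k, 'a) uea_carrier)"
        "(term_UEA g, term_UEA_unit g)"] term_UEA_universal
    unfolding cUEA_def by (simp add: split_beta)
  then show ?thesis
    by (rule universal_arrow_transfer[OF term_UEA_universal term_UEA_universal])
qed

end
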